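(* Let $P$ be an ergodic transition matrix on a finite set $\mathcal{X}$ with pseudo-spectral gap $\gamma_{\mathsf{ps}}$ and let $k_{\mathsf{ps}}$ be as defined below. For every integer $p\ge 1$, $$p\,\gamma_{\mathsf{ps}}\Big(1-\frac{p\,k_{\mathsf{ps}}\gamma_{\mathsf{ps}}}{2}\Big)<\gamma^{(p)}_{\mathsf{ps}}\le p\,\gamma_{\mathsf{ps}} .$$ Consequently, if $p\le 1/(k_{\mathsf{ps}}\gamma_{\mathsf{ps}})$, then $\gamma^{(p)}_{\mathsf{ps}}\ge p\gamma_{\mathsf{ps}}/2$.
   Context: $P$ is row-stochastic on finite $\mathcal{X}$, ergodic (primitive), with unique stationary distribution $\pi>0$. The time reversal is $P^\star(x,x')=\pi(x')P(x',x)/\pi(x)$. For a transition matrix $Q$ with stationary distribution $\pi$, $Q^\star Q$ is self-adjoint in $\ell_2(\pi)$ (inner product $\sum_x f(x)g(x)\pi(x)$) with real eigenvalues $1=\lambda_1\ge\lambda_2\ge\dots\ge 0$ counted with multiplicity, and $\gamma_\dagger(Q)\doteq 1-\lambda_2(Q^\star Q)$. The pseudo-spectral gap is $\gamma_{\mathsf{ps}}(P)=\max_{k\ge 1}\gamma_\dagger(P^k)/k$ (a maximum which is attained and positive for ergodic $P$); $\gamma_{\mathsf{ps}}=\gamma_{\mathsf{ps}}(P)$, $k_{\mathsf{ps}}$ is the smallest integer $k$ with $\gamma_{\mathsf{ps}}=\gamma_\dagger(P^{k})/k$, and $\gamma^{(p)}_{\mathsf{ps}}\doteq\gamma_{\mathsf{ps}}(P^p)$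 is the pseudo-spectral gap of the $p$-skipped chain with transition matrix $P^p$. *)

theory Defs
  imports "Jordan_Normal_Form.Char_Poly"
begin

definition row_stochastic :: "nat \<Rightarrow> real mat \<Rightarrow> bool" where
  "row_stochastic n P \<longleftrightarrow> P \<in> carrier_mat n n \<and>
     (\<forall>i<n. \<forall>j<n. P $$ (i,j) \<ge> 0) \<and> (\<forall>i<n. (\<Sum>j<n. P $$ (i,j)) = 1)"

text \<open>Ergodic = primitive: some power has all entries strictly positive.\<close>
definition primitive :: "nat \<Rightarrow> real mat \<Rightarrow> bool" where
  "primitive n P \<longleftrightarrow> (\<exists>k. \<forall>i<n. \<forall>j<n. (P ^\<^sub>m k) $$ (i,j) > 0)"

definition stationary_dist :: "nat \<Rightarrow> real mat \<Rightarrow> (nat \<Rightarrow> real) \<Rightarrow> bool" where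
  "stationary_dist n P \<pi> \<longleftrightarrow> (\<forall>i<n. \<pi> i > 0) \<and> (\<Sum>i<n. \<pi> i) = 1 \<and>
     (\<forall>j<n. (\<Sum>i<n. \<pi> i * P $$ (i,j)) = \<pi> j)"

definition time_reversal :: "nat \<Rightarrow> (nat \<Rightarrow> real) \<Rightarrow> real mat \<Rightarrow> real mat" where
  "time_reversal n \<pi> Q = mat n n (\<lambda>(x,x'). \<pi> x' * Q $$ (x',x) / \<pi> x)"

text \<open>Eigenvalues counted with multiplicity = real roots of the characteristic polynomial
  counted with their root multiplicity.  lambda2 M is the second largest eigenvalue
  (with multiplicity) in the list 1 = lambda_1 >= lambda_2 >= ...; for a 1 x 1 matrix
  (no second eigenvalue) the list is padded with 0.\<close>
definition eig_count_ge :: "real mat \<Rightarrow> real \<Rightarrow> nat" where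
  "eig_count_ge M t = (\<Sum>r\<in>{r. poly (char_poly M) r = 0 \<and> r \<ge> t}. order r (char_poly M))"

definition lambda2 :: "real mat \<Rightarrow> real" where
  "lambda2 M = (let S = {t. poly (char_poly M) t = 0 \<and> eig_count_ge M t \<ge> 2}
                in if S = {} then 0 else Max S)"

definition gamma_dagger :: "nat \<Rightarrow> (nat \<Rightarrow> real) \<Rightarrow> real mat \<Rightarrow> real" where
  "gamma_dagger n \<pi> Q = 1 - lambda2 (time_reversal n \<pi> Q * Q)"

text \<open>Pseudo-spectral gap: max over k >= 1 of gamma_dagger(Q^k)/k (the max is attained).\<close>
definition gamma_ps :: "nat \<Rightarrow> (nat \<Rightarrow> real) \<Rightarrow> real mat \<Rightarrow> real" where
  "gamma_ps n \<pi> Q = (SUP k\<in>{1..}. gamma_dagger n \<pi> (Q ^\<^sub>m k) / real k)"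

definition k_ps :: "nat \<Rightarrow> (nat \<Rightarrow> real) \<Rightarrow> real mat \<Rightarrow> nat" where
  "k_ps n \<pi> Q = (LEAST k. k \<ge> 1 \<and> gamma_ps n \<pi> Q = gamma_dagger n \<pi> (Q ^\<^sub>m k) / real k)"

end

theory Submission
  imports Defs "Jordan_Normal_Form.Schur_Decomposition"
begin

text \<open>Write \<open>\<lambda>(Q) = lambda2 (Q\<^sup>\<star> Q) = 1 - gamma_dagger Q\<close>. Conjugation by \<open>diag (sqrt \<pi>)\<close>
  turns \<open>Q\<^sup>\<star> Q\<close> into \<open>T\<^sup>T T\<close>, where the contraction \<open>T\<close> fixes \<open>sqrt \<pi>\<close> and preserves its
  orthogonal complement; by the spectral theorem \<open>\<lambda>(Q)\<close> is the best constant in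
  \<open>|T x|\<^sup>2 \<le> \<lambda>(Q) |x|\<^sup>2\<close> on that complement. Hence \<open>\<lambda>(Q ^ p) \<le> \<lambda>(Q) ^ p\<close>, that is
  \<open>gamma_dagger (Q ^ p) \<ge> 1 - (1 - gamma_dagger Q) ^ p\<close>.

  The upper bound holds because \<open>gamma_dagger ((P ^ p) ^ k) / k = p * gamma_dagger (P ^ (p k)) / (p k)\<close>.
  For the lower bound put \<open>Q = P ^ k_ps\<close> and \<open>x = k_ps * gamma_ps = gamma_dagger Q\<close>; then
  \<open>k_ps * gamma_ps (P ^ p) \<ge> gamma_dagger (Q ^ p) \<ge> 1 - (1 - x) ^ p > p x (1 - p x / 2)\<close>.
  Primitivity makes some \<open>gamma_dagger (P ^ k)\<close> positive (by the maximum principle, a positive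
  stochastic matrix has no second eigenvector of eigenvalue 1), and \<open>gamma_dagger (P ^ k) / k \<le> 1 / k\<close>,
  so the supremum defining \<open>gamma_ps\<close> is a positive maximum.\<close>

text \<open>Vectors of \<open>\<real>\<^sup>n\<close> are represented as functions on \<open>{..<n}\<close>; values outside
  this range are irrelevant to \<open>dot\<close> and \<open>mat_vec\<close>.\<close>

definition dot :: "nat \<Rightarrow> (nat \<Rightarrow> real) \<Rightarrow> (nat \<Rightarrow> real) \<Rightarrow> real" where
  "dot n x y = (\<Sum>i<n. x i * y i)"

definition mat_vec :: "nat \<Rightarrow> real mat \<Rightarrow> (nat \<Rightarrow> real) \<Rightarrow> nat \<Rightarrow> real" where
  "mat_vec n A x = (\<lambda>i. \<Sum>j<n. A $$ (i,j) * x j)"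

definition symmetric_mat :: "nat \<Rightarrow> real mat \<Rightarrow> bool" where
  "symmetric_mat n A \<longleftrightarrow> (\<forall>i<n. \<forall>j<n. A $$ (i,j) = A $$ (j,i))"

definition trace_mat :: "nat \<Rightarrow> 'a::comm_ring_1 mat \<Rightarrow> 'a" where
  "trace_mat n X = (\<Sum>i<n. X $$ (i,i))"

lemma dot_commute: "dot n x y = dot n y x"
  unfolding dot_def by (simp add: mult.commute)

lemma dot_self_nonneg: "dot n x x \<ge> 0"
  unfolding dot_def by (intro sum_nonneg) auto

lemma dot_self_pos: "i < n \<Longrightarrow> x i \<noteq> 0 \<Longrightarrow> dot n x x > 0"
  unfolding dot_def by (intro sum_pos2[of _ i]) (auto simp: not_sum_power2_lt_zero zero_less_mult_iff)

lemma dot_cong: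
  "(\<And>j. j < n \<Longrightarrow> x j = x' j) \<Longrightarrow> (\<And>j. j < n \<Longrightarrow> y j = y' j) \<Longrightarrow> dot n x y = dot n x' y'"
  unfolding dot_def by (auto intro!: sum.cong)

lemma dot_scale_right: "dot n x (\<lambda>a. c * y a) = c * dot n x y"
  unfolding dot_def by (simp add: sum_distrib_left ac_simps)

lemma dot_diff_diff:
  "dot n (\<lambda>a. \<alpha> * f a - \<beta> * g a) (\<lambda>a. \<gamma> * f' a - \<delta> * g' a) =
   \<alpha> * \<gamma> * dot n f f' - \<alpha> * \<delta> * dot n f g' - \<beta> * \<gamma> * dot n g f' + \<beta> * \<delta> * dot n g g'"
  unfolding dot_def by (simp add: algebra_simps sum.distrib sum_subtractf sum_distrib_left)

lemma dot_vec_pos: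
  assumes "y \<in> carrier_vec n" "y \<noteq> 0\<^sub>v n"
  shows "dot n (\<lambda>i. y $ i) (\<lambda>i. y $ i) > 0"
proof -
  from assms obtain i where "i < n" "y $ i \<noteq> 0"
    by (metis eq_vecI carrier_vecD index_zero_vec(1,2))
  then show ?thesis by (rule dot_self_pos)
qed

lemma index_mult_mat_sum:
  "A \<in> carrier_mat n n \<Longrightarrow> B \<in> carrier_mat n n \<Longrightarrow> i < n \<Longrightarrow> j < n \<Longrightarrow>
   (A * B) $$ (i,j) = (\<Sum>k<n. A $$ (i,k) * B $$ (k,j))"
  by (simp add: scalar_prod_def lessThan_atLeast0)

lemma mat_vec_index_mult_mat_vec:
  "A \<in> carrier_mat n n \<Longrightarrow> y \<in> carrier_vec n \<Longrightarrow> i < n \<Longrightarrow>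
   (A *\<^sub>v y) $ i = mat_vec n A (\<lambda>j. y $ j) i"
  unfolding mat_vec_def by (simp add: scalar_prod_def lessThan_atLeast0)

lemma trace_mat_mult_commute:
  assumes "X \<in> carrier_mat n n" "Y \<in> carrier_mat n n"
  shows "trace_mat n (X * Y) = trace_mat n (Y * X)"
proof -
  have "trace_mat n (X * Y) = (\<Sum>i<n. \<Sum>k<n. X $$ (i,k) * Y $$ (k,i))"
    unfolding trace_mat_def by (intro sum.cong) (auto simp: index_mult_mat_sum[OF assms])
  also have "\<dots> = (\<Sum>k<n. \<Sum>i<n. Y $$ (k,i) * X $$ (i,k))"
    by (subst sum.swap) (simp add: mult.commute)
  also have "\<dots> = trace_mat n (Y * X)"
    unfolding trace_mat_def by (intro sum.cong) (auto simp: index_mult_mat_sum[OF assms(2,1)])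
  finally show ?thesis .
qed

lemma mat_vec_mult:
  assumes "A \<in> carrier_mat n n" "B \<in> carrier_mat n n" "i < n"
  shows "mat_vec n (A * B) x i = mat_vec n A (mat_vec n B x) i"
proof -
  have "mat_vec n (A * B) x i = (\<Sum>j<n. \<Sum>k<n. A $$ (i,k) * B $$ (k,j) * x j)"
    unfolding mat_vec_def
    by (auto simp del: index_mult_mat simp: index_mult_mat_sum[OF assms] sum_distrib_right
        intro!: sum.cong)
  also have "\<dots> = (\<Sum>k<n. \<Sum>j<n. A $$ (i,k) * (B $$ (k,j) * x j))"
    by (subst sum.swap) (simp add: mult.assoc)
  also have "\<dots> = mat_vec n A (mat_vec n B x) i"
    unfolding mat_vec_def by (simp add: sum_distrib_left)
  finally show ?thesis .
qed

lemma mat_vec_one: "i < n \<Longrightarrow> mat_vec n (1\<^sub>m n) x i = x i"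
  unfolding mat_vec_def by (simp add: if_distrib[of "\<lambda>t. t * _"] sum.delta cong: if_cong)

lemma mat_vec_cong: "(\<And>j. j < n \<Longrightarrow> x j = y j) \<Longrightarrow> mat_vec n A x i = mat_vec n A y i"
  unfolding mat_vec_def by (auto intro!: sum.cong)

lemma dot_mat_vec_transpose:
  assumes "A \<in> carrier_mat n n"
  shows "dot n (mat_vec n (transpose_mat A) y) z = dot n y (mat_vec n A z)"
proof -
  have "dot n (mat_vec n (transpose_mat A) y) z = (\<Sum>i<n. \<Sum>j<n. A $$ (j,i) * y j * z i)"
    unfolding dot_def mat_vec_def using assms by (auto simp: sum_distrib_right intro!: sum.cong)
  also have "\<dots> = (\<Sum>j<n. \<Sum>i<n. y j * (A $$ (j,i) * z i))"
    by (subst sum.swap) (simp add: ac_simps)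
  also have "\<dots> = dot n y (mat_vec n A z)"
    unfolding dot_def mat_vec_def by (simp add: sum_distrib_left)
  finally show ?thesis .
qed

lemma symmetric_mat_iff_transpose:
  "A \<in> carrier_mat n n \<Longrightarrow> symmetric_mat n A \<longleftrightarrow> transpose_mat A = A"
  unfolding symmetric_mat_def by (auto simp: eq_matI mat_eq_iff)

lemma dot_mat_vec_symmetric:
  assumes "A \<in> carrier_mat n n" "symmetric_mat n A"
  shows "dot n (mat_vec n A y) z = dot n y (mat_vec n A z)"
  using dot_mat_vec_transpose[OF assms(1)] assms by (simp add: symmetric_mat_iff_transpose)

lemma symmetric_mat_transpose_mult_self:
  "T \<in> carrier_mat n n \<Longrightarrow> symmetric_mat n (transpose_mat T * T)"
  by (subst symmetric_mat_iff_transpose) (auto simp: transpose_mult[of _ n n _ n])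

lemma pow_mat_add: "A \<in> carrier_mat n n \<Longrightarrow> A ^\<^sub>m (a + b) = A ^\<^sub>m a * A ^\<^sub>m b"
proof (induction b)
  case (Suc b)
  have "A ^\<^sub>m (a + Suc b) = A ^\<^sub>m a * A ^\<^sub>m b * A" using Suc by simp
  also have "\<dots> = A ^\<^sub>m a * (A ^\<^sub>m b * A)"
    using Suc.prems by (simp add: assoc_mult_mat[of _ n n _ n _ n])
  finally show ?case by simp
qed simp

lemma pow_mat_pow_mat: "A \<in> carrier_mat n n \<Longrightarrow> (A ^\<^sub>m p) ^\<^sub>m k = A ^\<^sub>m (p * k)"
proof (induction k)
  case (Suc k)
  have "(A ^\<^sub>m p) ^\<^sub>m Suc k = A ^\<^sub>m (p * k) * A ^\<^sub>m p" using Suc by simp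
  also have "\<dots> = A ^\<^sub>m (p * k + p)" by (rule pow_mat_add[OF Suc.prems, symmetric])
  finally show ?case by (simp add: algebra_simps)
qed simp

lemma mult_diag_fun_mat:
  "mat n n (\<lambda>(i,j). if i = j then f i else 0) * mat n n (\<lambda>(i,j). if i = j then g i else 0) =
   mat n n (\<lambda>(i,j). if i = j then f i * g i else (0::real))"
  by (rule eq_matI)
    (auto simp: scalar_prod_def lessThan_atLeast0 if_distrib[of "\<lambda>t. t * _"] sum.delta cong: if_cong)

section \<open>Spectral theorem for real symmetric matrices\<close>

lemma sum_cnj_mult_self_nonzero:
  assumes "v \<in> carrier_vec n" "v \<noteq> 0\<^sub>v n"
  shows "(\<Sum>i<n. cnj (v $ i) * v $ i) \<noteq> 0"
proof -
  from assms obtain i where i: "i < n" "v $ i \<noteq> 0" by (metis eq_vecI carrier_vecD index_zero_vec(1,2))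
  have "(\<Sum>i<n. cnj (v $ i) * v $ i) = complex_of_real (\<Sum>i<n. (norm (v $ i))\<^sup>2)"
    by (simp add: complex_mult_cnj mult.commute cmod_power2)
  moreover have "(\<Sum>i<n. (norm (v $ i))\<^sup>2) > 0" using i by (intro sum_pos2[of _ i]) auto
  ultimately show ?thesis by (metis less_irrefl of_real_eq_0_iff)
qed

lemma symmetric_mat_complex_eigenvalue_real:
  assumes A: "A \<in> carrier_mat n n" and S: "symmetric_mat n A"
    and ev: "eigenvector (map_mat complex_of_real A) v a"
  shows "Im a = 0"
proof -
  let ?Ac = "map_mat complex_of_real A"
  from ev A have v: "v \<in> carrier_vec n" "v \<noteq> 0\<^sub>v n" "?Ac *\<^sub>v v = a \<cdot>\<^sub>v v"
    unfolding eigenvector_def by auto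
  have Av: "(\<Sum>j<n. complex_of_real (A $$ (i,j)) * v $ j) = a * v $ i" if "i < n" for i
  proof -
    have "(?Ac *\<^sub>v v) $ i = a * v $ i" using v that by simp
    thus ?thesis using that A v(1) by (simp add: scalar_prod_def lessThan_atLeast0)
  qed
  define S where "S = (\<Sum>i<n. \<Sum>j<n. cnj (v $ i) * complex_of_real (A $$ (i,j)) * v $ j)"
  define s where "s = (\<Sum>i<n. cnj (v $ i) * v $ i)"
  have S_eq: "S = a * s"
  proof -
    have "S = (\<Sum>i<n. cnj (v $ i) * (\<Sum>j<n. complex_of_real (A $$ (i,j)) * v $ j))"
      unfolding S_def by (simp add: sum_distrib_left mult.assoc)
    also have "\<dots> = (\<Sum>i<n. a * (cnj (v $ i) * v $ i))"
      by (intro sum.cong) (auto simp: Av)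
    finally show ?thesis unfolding s_def by (simp add: sum_distrib_left)
  qed
  have S_real: "cnj S = S"
  proof -
    have "cnj S = (\<Sum>i<n. \<Sum>j<n. v $ i * complex_of_real (A $$ (i,j)) * cnj (v $ j))"
      unfolding S_def by simp
    also have "\<dots> = (\<Sum>j<n. \<Sum>i<n. v $ i * complex_of_real (A $$ (i,j)) * cnj (v $ j))"
      by (rule sum.swap)
    also have "\<dots> = S" unfolding S_def
      using S by (auto simp: symmetric_mat_def ac_simps intro!: sum.cong)
    finally show ?thesis .
  qed
  have "s \<noteq> 0" unfolding s_def by (rule sum_cnj_mult_self_nonzero[OF v(1,2)])
  moreover have "cnj s = s" unfolding s_def by (simp add: mult.commute)
  hence "cnj a * s = a * s" using S_eq S_real by (metis complex_cnj_mult)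
  ultimately have "cnj a = a" by simp
  thus ?thesis by (metis complex_cnj_cancel_iff complex_eq_iff cnj.simps(2) neg_equal_zero)
qed

lemma symmetric_mat_char_poly_root_real:
  assumes A: "A \<in> carrier_mat n n" and S: "symmetric_mat n A"
    and root: "poly (char_poly (map_mat complex_of_real A)) a = 0"
  shows "Im a = 0"
proof -
  have "eigenvalue (map_mat complex_of_real A) a"
    using root eigenvalue_root_char_poly[of "map_mat complex_of_real A" n] A by simp
  then obtain v where "eigenvector (map_mat complex_of_real A) v a"
    unfolding eigenvalue_def by blast
  then show ?thesis by (rule symmetric_mat_complex_eigenvalue_real[OF A S])
qed

lemma char_poly_root_eigenvector:
  assumes A: "A \<in> carrier_mat n n" and root: "poly (char_poly A) r = 0"
  shows "\<exists>x. dot n x x > 0 \<and> (\<forall>a<n. mat_vec n A x a = r * x a)"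
proof -
  have "eigenvalue A r" using eigenvalue_root_char_poly[OF A] root by simp
  then obtain w where "eigenvector A w r" unfolding eigenvalue_def by blast
  hence w: "w \<in> carrier_vec n" "w \<noteq> 0\<^sub>v n" "A *\<^sub>v w = r \<cdot>\<^sub>v w"
    using A unfolding eigenvector_def by auto
  have "mat_vec n A (\<lambda>i. w $ i) a = r * w $ a" if "a < n" for a
    using mat_vec_index_mult_mat_vec[OF A w(1) that] w(1,3) that by simp
  thus ?thesis using dot_vec_pos[OF w(1,2)] by blast
qed

lemma trace_mat_square_strictly_upper_triangular:
  assumes B: "B \<in> carrier_mat n n" and ut: "upper_triangular B"
    and diag: "\<And>i. i < n \<Longrightarrow> B $$ (i,i) = 0"
  shows "trace_mat n (B * B) = 0"
proof -
  have "B $$ (i,k) * B $$ (k,i) = 0" if "i < n" "k < n" for i k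
    using ut B diag that unfolding upper_triangular_def
    by (cases rule: linorder_cases[of k i]) auto
  thus ?thesis unfolding trace_mat_def by (simp add: index_mult_mat_sum[OF B B])
qed

text \<open>If all eigenvalues vanish, Schur triangularization makes \<open>A\<close> similar to a strictly upper
  triangular matrix, so \<open>trace (A * A)\<close>, which is the sum of squares of the entries of \<open>A\<close>, is zero.\<close>

lemma symmetric_mat_eq_0_if_char_poly_monom:
  assumes A: "A \<in> carrier_mat n n" and S: "symmetric_mat n A"
    and cp: "char_poly A = [:0, 1:] ^ n" and ij: "i < n" "j < n"
  shows "A $$ (i,j) = 0"
proof -
  have cpA: "char_poly A = (\<Prod>e\<leftarrow>replicate n (0::real). [:- e, 1:])"
    using cp by (simp add: prod_list_replicate)
  obtain B P Q where sd: "schur_decomposition A (replicate n 0) = (B,P,Q)"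
    by (cases "schur_decomposition A (replicate n 0)") auto
  from schur_decomposition[OF A cpA sd]
  have sim: "similar_mat_wit A B P Q" and ut: "upper_triangular B"
    and dg: "diag_mat B = replicate n 0" by auto
  from sim A have car: "B \<in> carrier_mat n n" "P \<in> carrier_mat n n" "Q \<in> carrier_mat n n"
    and QP: "Q * P = 1\<^sub>m n"
    unfolding similar_mat_wit_def Let_def by auto
  have diagB: "B $$ (k,k) = 0" if "k < n" for k
    using arg_cong[OF dg, of "\<lambda>xs. xs ! k"] that car(1) by (simp add: diag_mat_def)
  have "A * A = P * (B * B) * Q"
    using similar_mat_wit_pow_id[OF sim, of 2] A car by (simp add: numeral_2_eq_2)
  hence "trace_mat n (A * A) = trace_mat n (Q * (P * (B * B)))"
    using trace_mat_mult_commute[of "P * (B * B)" n Q] car by simp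
  also have "Q * (P * (B * B)) = B * B"
    using car QP by (simp add: assoc_mult_mat[of Q n n P n "B * B" n, symmetric])
  finally have "trace_mat n (A * A) = 0"
    using trace_mat_square_strictly_upper_triangular[OF car(1) ut diagB] by simp
  moreover have "trace_mat n (A * A) = (\<Sum>k<n. \<Sum>l<n. (A $$ (k,l))\<^sup>2)"
    unfolding trace_mat_def using S
    by (intro sum.cong refl) (auto simp: index_mult_mat_sum[OF A A] symmetric_mat_def power2_eq_square)
  ultimately have "(\<Sum>k<n. \<Sum>l<n. (A $$ (k,l))\<^sup>2) = 0" by simp
  hence "(\<Sum>l<n. (A $$ (i,l))\<^sup>2) = 0"
    using ij by (subst (asm) sum_nonneg_eq_0_iff) (auto intro: sum_nonneg)
  thus ?thesis using ij by (subst (asm) sum_nonneg_eq_0_iff) auto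
qed

lemma symmetric_mat_nonzero_eigenvalue:
  assumes A: "A \<in> carrier_mat n n" and S: "symmetric_mat n A"
    and nz: "i < n" "j < n" "A $$ (i,j) \<noteq> 0"
  shows "\<exists>r x. r \<noteq> 0 \<and> dot n x x > 0 \<and> (\<forall>a<n. mat_vec n A x a = r * x a)"
proof -
  let ?Ac = "map_mat complex_of_real A"
  interpret of_real: map_poly_inj_comm_ring_hom "complex_of_real" by unfold_locales auto
  obtain as where cp: "char_poly ?Ac = (\<Prod>a\<leftarrow>as. [:- a, 1:])" and len: "length as = n"
    using char_poly_factorized[of ?Ac n] A by auto
  have cpr: "char_poly ?Ac = map_poly of_real (char_poly A)"
    using of_real_hom.char_poly_hom[OF A] by simp
  show ?thesis
  proof (cases "\<exists>a\<in>set as. a \<noteq> 0")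
    case True
    then obtain a where a: "a \<in> set as" "a \<noteq> 0" by blast
    have root: "poly (char_poly ?Ac) a = 0" using a by (simp add: cp linear_poly_root)
    hence "a = complex_of_real (Re a)"
      using symmetric_mat_char_poly_root_real[OF A S] by (simp add: complex_eq_iff)
    hence "poly (char_poly A) (Re a) = 0" "Re a \<noteq> 0"
      using root a(2) unfolding cpr by (metis of_real_eq_0_iff of_real_hom.poly_map_poly)+
    thus ?thesis using char_poly_root_eigenvector[OF A] by blast
  next
    case False
    hence "as = replicate n 0" using len by (metis replicate_length_same)
    hence "map_poly complex_of_real (char_poly A) = map_poly of_real ([:0,1:] ^ n)"
      unfolding cpr[symmetric] cp by (simp add: prod_list_replicate of_real.hom_power)
    hence "char_poly A = [:0,1:] ^ n" using of_real.eq_iff by blast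
    thus ?thesis using symmetric_mat_eq_0_if_char_poly_monom[OF A S _ nz(1,2)] nz(3) by blast
  qed
qed

definition orthonormal :: "nat \<Rightarrow> nat \<Rightarrow> (nat \<Rightarrow> nat \<Rightarrow> real) \<Rightarrow> bool" where
  "orthonormal n k v \<longleftrightarrow> (\<forall>i<k. \<forall>j<k. dot n (v i) (v j) = (if i = j then 1 else 0))"

lemma exists_orthogonal_nonzero:
  assumes k: "k < n"
  shows "\<exists>x. dot n x x > 0 \<and> (\<forall>i<k. dot n (v i) x = 0)"
proof -
  define c where "c = (\<lambda>i. vec n (\<lambda>j. if i < k then v i j else (0::real)))"
  define B where "B = mat\<^sub>r n n (\<lambda>i. if i = n - 1 then 0\<^sub>v n else c i)"
  have B: "B \<in> carrier_mat n n" unfolding B_def by simp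
  have "det B = 0" unfolding B_def by (rule det_row_0) (use k in \<open>auto simp: c_def\<close>)
  then obtain y where y: "y \<in> carrier_vec n" "y \<noteq> 0\<^sub>v n" "B *\<^sub>v y = 0\<^sub>v n"
    using det_0_iff_vec_prod_zero_field[OF B] by blast
  have "dot n (v j) (\<lambda>i. y $ i) = 0" if j: "j < k" for j
  proof -
    have "(B *\<^sub>v y) $ j = dot n (v j) (\<lambda>i. y $ i)"
      using j k y(1) unfolding B_def c_def dot_def
      by (simp add: scalar_prod_def lessThan_atLeast0 mat_of_rows_def row_def)
    thus ?thesis using y(3) j k by simp
  qed
  thus ?thesis using dot_vec_pos[OF y(1,2)] by blast
qed

definition perp_proj_mat :: "nat \<Rightarrow> nat \<Rightarrow> (nat \<Rightarrow> nat \<Rightarrow> real) \<Rightarrow> real mat" where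
  "perp_proj_mat n k v = mat n n (\<lambda>(a,b). (if a = b then 1 else 0) - (\<Sum>i<k. v i a * v i b))"

lemma perp_proj_mat_carrier: "perp_proj_mat n k v \<in> carrier_mat n n"
  unfolding perp_proj_mat_def by simp

lemma symmetric_perp_proj_mat: "symmetric_mat n (perp_proj_mat n k v)"
  unfolding perp_proj_mat_def symmetric_mat_def by (auto simp: mult.commute)

lemma mat_vec_perp_proj_mat:
  assumes "a < n"
  shows "mat_vec n (perp_proj_mat n k v) x a = x a - (\<Sum>i<k. dot n (v i) x * v i a)"
proof -
  have "mat_vec n (perp_proj_mat n k v) x a =
      (\<Sum>b<n. (if a = b then 1 else 0) * x b) - (\<Sum>b<n. \<Sum>i<k. v i a * v i b * x b)"
    unfolding mat_vec_def perp_proj_mat_def using assms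
    by (simp add: sum_subtractf left_diff_distrib sum_distrib_right)
  also have "(\<Sum>b<n. (if a = b then 1 else 0) * x b) = x a"
    using assms by (simp add: if_distrib[of "\<lambda>t. t * _"] sum.delta cong: if_cong)
  also have "(\<Sum>b<n. \<Sum>i<k. v i a * v i b * x b) = (\<Sum>i<k. dot n (v i) x * v i a)"
    unfolding dot_def by (subst sum.swap) (simp add: sum_distrib_left sum_distrib_right ac_simps)
  finally show ?thesis .
qed

lemma mat_vec_perp_proj_mat_orthogonal:
  "\<forall>j<k. dot n (v j) x = 0 \<Longrightarrow> a < n \<Longrightarrow> mat_vec n (perp_proj_mat n k v) x a = x a"
  by (simp add: mat_vec_perp_proj_mat)

lemma dot_mat_vec_perp_proj_mat:
  assumes orth: "orthonormal n k v" and j: "j < k"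
  shows "dot n (v j) (mat_vec n (perp_proj_mat n k v) x) = 0"
proof -
  have "dot n (v j) (mat_vec n (perp_proj_mat n k v) x) =
      dot n (v j) x - (\<Sum>a<n. \<Sum>i<k. v j a * (dot n (v i) x * v i a))"
    unfolding dot_def[of n "v j"]
    by (simp add: mat_vec_perp_proj_mat right_diff_distrib sum_subtractf sum_distrib_left)
  also have "(\<Sum>a<n. \<Sum>i<k. v j a * (dot n (v i) x * v i a)) =
      (\<Sum>i<k. \<Sum>a<n. v j a * (dot n (v i) x * v i a))"
    by (rule sum.swap)
  also have "\<dots> = (\<Sum>i<k. dot n (v i) x * dot n (v j) (v i))"
    by (simp add: dot_def[of n "v j"] sum_distrib_left ac_simps)
  also have "\<dots> = dot n (v j) x"
    using orth j unfolding orthonormal_def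
    by (simp add: if_distrib[of "\<lambda>t. _ * t"] sum.delta cong: if_cong)
  finally show ?thesis by simp
qed

lemma mat_vec_scale: "mat_vec n A (\<lambda>a. c * x a) i = c * mat_vec n A x i"
  unfolding mat_vec_def by (simp add: sum_distrib_left ac_simps)

lemma mat_vec_mult3:
  assumes "A \<in> carrier_mat n n" "B \<in> carrier_mat n n" "C \<in> carrier_mat n n" "a < n"
  shows "mat_vec n (A * B * C) x a = mat_vec n A (mat_vec n B (mat_vec n C x)) a"
proof -
  have "mat_vec n (A * B * C) x a = mat_vec n A (mat_vec n (B * C) x) a"
    using assms by (simp add: mat_vec_mult[of A n "B * C"] assoc_mult_mat[of _ n n _ n _ n])
  also have "\<dots> = mat_vec n A (mat_vec n B (mat_vec n C x)) a"
    by (rule mat_vec_cong) (simp add: mat_vec_mult assms)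
  finally show ?thesis .
qed

lemma symmetric_mat_mult3:
  assumes "A \<in> carrier_mat n n" "symmetric_mat n A" "B \<in> carrier_mat n n" "symmetric_mat n B"
  shows "symmetric_mat n (B * A * B)"
proof -
  have "transpose_mat (B * A * B) = B * A * B"
    using assms by (simp add: transpose_mult[of _ n n _ n] assoc_mult_mat[of _ n n _ n _ n]
        symmetric_mat_iff_transpose)
  thus ?thesis using assms by (simp add: symmetric_mat_iff_transpose)
qed

lemma dot_mat_vec_orthogonal_eigenvectors:
  assumes A: "A \<in> carrier_mat n n" and S: "symmetric_mat n A"
    and eig: "\<And>i a. i < k \<Longrightarrow> a < n \<Longrightarrow> mat_vec n A (v i) a = d i * v i a"
    and x: "\<forall>j<k. dot n (v j) x = 0" and j: "j < k"
  shows "dot n (v j) (mat_vec n A x) = 0"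
proof -
  have "dot n (v j) (mat_vec n A x) = dot n (\<lambda>a. d j * v j a) x"
    unfolding dot_mat_vec_symmetric[OF A S, symmetric] by (rule dot_cong) (use eig j in auto)
  thus ?thesis using x j by (simp add: dot_commute[of n _ x] dot_scale_right)
qed

text \<open>The eigenvector is found for the compression \<open>A' = \<Pi> A \<Pi>\<close> to the orthogonal complement.
  An eigenvector of \<open>A'\<close> with nonzero eigenvalue lies in the range of \<open>\<Pi>\<close>; if there is none,
  \<open>A' = 0\<close> and every vector of the complement is an eigenvector of \<open>A\<close> with eigenvalue \<open>0\<close>.\<close>

lemma symmetric_mat_orthogonal_eigenvector:
  assumes A: "A \<in> carrier_mat n n" and S: "symmetric_mat n A" and k: "k < n"
    and orth: "orthonormal n k v"
    and eig: "\<And>i a. i < k \<Longrightarrow> a < n \<Longrightarrow> mat_vec n A (v i) a = d i * v i a"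
  shows "\<exists>x r. dot n x x > 0 \<and> (\<forall>j<k. dot n (v j) x = 0) \<and> (\<forall>a<n. mat_vec n A x a = r * x a)"
proof -
  let ?\<Pi> = "perp_proj_mat n k v"
  let ?A' = "?\<Pi> * A * ?\<Pi>"
  have \<Pi>: "?\<Pi> \<in> carrier_mat n n" by (rule perp_proj_mat_carrier)
  have A': "?A' \<in> carrier_mat n n" using \<Pi> A by simp
  have A'S: "symmetric_mat n ?A'" by (rule symmetric_mat_mult3[OF A S \<Pi> symmetric_perp_proj_mat])
  note mat_vec_A' = mat_vec_mult3[OF \<Pi> A \<Pi>]
  have A'_orth: "mat_vec n ?A' x a = mat_vec n A x a" if "a < n" "\<forall>j<k. dot n (v j) x = 0" for x a
    using that dot_mat_vec_orthogonal_eigenvectors[where k=k and v=v and d=d, OF A S eig]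
    by (simp add: mat_vec_A' mat_vec_perp_proj_mat_orthogonal cong: mat_vec_cong)
  show ?thesis
  proof (cases "\<exists>i<n. \<exists>j<n. ?A' $$ (i,j) \<noteq> 0")
    case True
    then obtain r x where rx: "r \<noteq> 0" "dot n x x > 0" "\<forall>a<n. mat_vec n ?A' x a = r * x a"
      using symmetric_mat_nonzero_eigenvalue[OF A' A'S] by blast
    have x_orth: "dot n (v j) x = 0" if j: "j < k" for j
    proof -
      have "dot n (v j) x =
          dot n (v j) (\<lambda>a. 1 / r * mat_vec n ?\<Pi> (mat_vec n A (mat_vec n ?\<Pi> x)) a)"
        by (rule dot_cong) (use rx mat_vec_A' in auto)
      also have "\<dots> = 1 / r * dot n (v j) (mat_vec n ?\<Pi> (mat_vec n A (mat_vec n ?\<Pi> x)))"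
        by (rule dot_scale_right)
      finally show ?thesis using dot_mat_vec_perp_proj_mat[OF orth j] by simp
    qed
    thus ?thesis using rx A'_orth by auto
  next
    case False
    obtain x where x: "dot n x x > 0" "\<forall>i<k. dot n (v i) x = 0"
      using exists_orthogonal_nonzero[OF k] by blast
    have "mat_vec n A x a = 0 * x a" if "a < n" for a
      using A'_orth[OF that x(2)] False that by (simp add: mat_vec_def)
    thus ?thesis using x by blast
  qed
qed

lemma exists_unit_multiple:
  assumes "dot n x x > 0"
  shows "\<exists>c. dot n (\<lambda>a. c * x a) (\<lambda>a. c * x a) = 1"
proof
  have "dot n (\<lambda>a. x a / sqrt (dot n x x)) (\<lambda>a. x a / sqrt (dot n x x)) = dot n x x / (sqrt (dot n x x))\<^sup>2"
    unfolding dot_def by (simp add: sum_divide_distrib power2_eq_square)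
  thus "dot n (\<lambda>a. 1 / sqrt (dot n x x) * x a) (\<lambda>a. 1 / sqrt (dot n x x) * x a) = 1"
    using assms by simp
qed

lemma symmetric_mat_orthonormal_eigenvectors:
  assumes A: "A \<in> carrier_mat n n" and S: "symmetric_mat n A"
  shows "k \<le> n \<Longrightarrow> \<exists>v d. orthonormal n k v \<and> (\<forall>i<k. \<forall>a<n. mat_vec n A (v i) a = d i * v i a)"
proof (induction k)
  case 0 show ?case by (simp add: orthonormal_def)
next
  case (Suc k)
  then obtain v d where orth: "orthonormal n k v"
    and eig: "\<forall>i<k. \<forall>a<n. mat_vec n A (v i) a = d i * v i a" by auto
  have "k < n" using Suc.prems by simp
  then obtain x r where x: "dot n x x > 0" "\<forall>j<k. dot n (v j) x = 0" "\<forall>a<n. mat_vec n A x a = r * x a"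
    using symmetric_mat_orthogonal_eigenvector[OF A S _ orth eig[rule_format]] by blast
  obtain c where c: "dot n (\<lambda>a. c * x a) (\<lambda>a. c * x a) = 1"
    using exists_unit_multiple[OF x(1)] by blast
  define w where "w = (\<lambda>a. c * x a)"
  have w: "dot n w w = 1" "\<forall>j<k. dot n (v j) w = 0" "\<forall>a<n. mat_vec n A w a = r * w a"
    using c x(2,3) unfolding w_def by (simp_all add: dot_scale_right mat_vec_scale)
  have "orthonormal n (Suc k) (v(k := w))"
    using orth w unfolding orthonormal_def
    by (auto simp: dot_commute less_Suc_eq)
  moreover have "\<forall>i<Suc k. \<forall>a<n. mat_vec n A ((v(k := w)) i) a = (d(k := r)) i * (v(k := w)) i a"
    using eig w by (auto simp: less_Suc_eq)
  ultimately show ?case by blast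
qed

lemma orthonormal_mat_orthogonal:
  assumes orth: "orthonormal n n v"
  defines "U \<equiv> mat n n (\<lambda>(a,i). v i a)"
  shows "transpose_mat U * U = 1\<^sub>m n" and "U * transpose_mat U = 1\<^sub>m n"
proof -
  have U: "U \<in> carrier_mat n n" and UT: "transpose_mat U \<in> carrier_mat n n" unfolding U_def by auto
  show UTU: "transpose_mat U * U = 1\<^sub>m n"
  proof (rule eq_matI)
    fix i j assume "i < dim_row (1\<^sub>m n)" "j < dim_col (1\<^sub>m n)"
    hence ij: "i < n" "j < n" by auto
    hence "(transpose_mat U * U) $$ (i,j) = dot n (v i) (v j)"
      unfolding dot_def by (subst index_mult_mat_sum[OF UT U]) (auto simp: U_def)
    thus "(transpose_mat U * U) $$ (i,j) = 1\<^sub>m n $$ (i,j)"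
      using orth ij unfolding orthonormal_def by simp
  qed (use U in auto)
  show "U * transpose_mat U = 1\<^sub>m n" by (rule mat_mult_left_right_inverse[OF UT U UTU])
qed

lemma orthonormal_complete:
  assumes orth: "orthonormal n n v" and ab: "a < n" "b < n"
  shows "(\<Sum>i<n. v i a * v i b) = (if a = b then 1 else 0)"
proof -
  let ?U = "mat n n (\<lambda>(a,i). v i a)"
  have U: "?U \<in> carrier_mat n n" and UT: "transpose_mat ?U \<in> carrier_mat n n" by auto
  show ?thesis
    using arg_cong[OF orthonormal_mat_orthogonal(2)[OF orth], of "\<lambda>X. X $$ (a,b)"] ab
    by (subst (asm) index_mult_mat_sum[OF U UT]) auto
qed

theorem symmetric_mat_spectral_decomposition:
  assumes A: "A \<in> carrier_mat n n" and S: "symmetric_mat n A"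
  obtains v d where "orthonormal n n v"
    and "\<And>i a. i < n \<Longrightarrow> a < n \<Longrightarrow> mat_vec n A (v i) a = d i * v i a"
    and "\<And>a b. a < n \<Longrightarrow> b < n \<Longrightarrow> (\<Sum>i<n. v i a * v i b) = (if a = b then 1 else 0)"
    and "char_poly A = (\<Prod>i\<leftarrow>[0..<n]. [:- d i, 1:])"
proof -
  obtain v d where orth: "orthonormal n n v"
    and eig: "\<forall>i<n. \<forall>a<n. mat_vec n A (v i) a = d i * v i a"
    using symmetric_mat_orthonormal_eigenvectors[OF A S, of n] by auto
  define U where "U = mat n n (\<lambda>(a,i). v i a)"
  define D where "D = mat n n (\<lambda>(i,j). if i = j then d i else 0)"
  have U: "U \<in> carrier_mat n n" and UT: "transpose_mat U \<in> carrier_mat n n"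
    and D: "D \<in> carrier_mat n n" unfolding U_def D_def by auto
  have UTU: "transpose_mat U * U = 1\<^sub>m n" and UUT: "U * transpose_mat U = 1\<^sub>m n"
    using orthonormal_mat_orthogonal[OF orth] unfolding U_def by blast+
  have AU: "A * U = U * D"
  proof (rule eq_matI)
    fix a i assume "a < dim_row (U * D)" "i < dim_col (U * D)"
    hence ai: "a < n" "i < n" using U D by auto
    have "(A * U) $$ (a,i) = mat_vec n A (v i) a"
      using ai unfolding mat_vec_def by (subst index_mult_mat_sum[OF A U]) (auto simp: U_def)
    also have "\<dots> = (U * D) $$ (a,i)"
      using ai eig by (subst index_mult_mat_sum[OF U D])
        (auto simp: U_def D_def if_distrib[of "\<lambda>t. _ * t"] sum.delta cong: if_cong)
    finally show "(A * U) $$ (a,i) = (U * D) $$ (a,i)" .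
  qed (use A U D in auto)
  have "A = (A * U) * transpose_mat U"
    using A U UT UUT by (simp add: assoc_mult_mat[of A n n U n _ n])
  hence "similar_mat_wit A D U (transpose_mat U)"
    unfolding similar_mat_wit_def Let_def AU using A U UT D UUT UTU by auto
  hence "char_poly A = char_poly D" by (intro char_poly_similar) (auto simp: similar_mat_def)
  also have "\<dots> = (\<Prod>a\<leftarrow>diag_mat D. [:- a, 1:])"
    by (rule char_poly_upper_triangular[OF D]) (auto simp: upper_triangular_def D_def)
  also have "diag_mat D = map d [0..<n]" unfolding diag_mat_def D_def by auto
  finally have "char_poly A = (\<Prod>i\<leftarrow>[0..<n]. [:- d i, 1:])" by (simp add: o_def)
  with that orth eig orthonormal_complete[OF orth] show ?thesis by blast
qed

section \<open>The second eigenvalue as a Rayleigh bound\<close>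

lemma order_prod_list_linear:
  "Polynomial.order r (\<Prod>i\<leftarrow>xs. [:- (d i :: real), 1:]) = length (filter (\<lambda>i. d i = r) xs)"
proof (induction xs)
  case Nil show ?case by (simp add: order_0I)
next
  case (Cons x xs)
  have "(\<Prod>i\<leftarrow>xs. [:- d i, 1:]) \<noteq> 0" by (auto simp: prod_list_zero_iff)
  hence nz: "[:- d x, 1:] * (\<Prod>i\<leftarrow>xs. [:- d i, 1:]) \<noteq> 0"
    by (metis mult_eq_0_iff pCons_eq_0_iff one_neq_zero)
  have eq: "(\<Prod>i\<leftarrow>x#xs. [:- d i, 1:]) = [:- d x, 1:] * (\<Prod>i\<leftarrow>xs. [:- d i, 1:])" by simp
  show ?case unfolding eq order_mult[OF nz] Cons.IH order_linear' by simp
qed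

lemma eig_count_ge_prod_linear:
  assumes cp: "char_poly M = (\<Prod>i\<leftarrow>[0..<n]. [:- d i, 1:])"
  shows "eig_count_ge M t = card {i. i < n \<and> t \<le> d i}"
proof -
  define I where "I = {i. i < n \<and> t \<le> d i}"
  have "{r. poly (char_poly M) r = 0 \<and> r \<ge> t} = d ` I"
    unfolding cp I_def by (auto simp: poly_prod_list_zero_iff)
  hence "eig_count_ge M t = (\<Sum>r\<in>d ` I. Polynomial.order r (char_poly M))"
    unfolding eig_count_ge_def by simp
  also have "\<dots> = (\<Sum>r\<in>d ` I. card {i\<in>I. d i = r})"
  proof (rule sum.cong[OF refl])
    fix r assume r: "r \<in> d ` I"
    have "Polynomial.order r (char_poly M) = card {i. i < n \<and> d i = r}"
      unfolding cp order_prod_list_linear length_filter_conv_card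
      by (rule arg_cong[where f=card]) auto
    also have "{i. i < n \<and> d i = r} = {i\<in>I. d i = r}" using r unfolding I_def by auto
    finally show "Polynomial.order r (char_poly M) = card {i\<in>I. d i = r}" .
  qed
  also have "\<dots> = card I" using sum.image_gen[of I "\<lambda>_. 1::nat" d] by (simp add: I_def)
  finally show ?thesis unfolding I_def .
qed

lemma lambda2_prod_linear:
  assumes "char_poly M = (\<Prod>i\<leftarrow>[0..<n]. [:- d i, 1:])"
  shows "lambda2 M = (let S = {t. (\<exists>i<n. d i = t) \<and> 2 \<le> card {i. i < n \<and> t \<le> d i}}
                      in if S = {} then 0 else Max S)"
proof -
  have "poly (char_poly M) t = 0 \<longleftrightarrow> (\<exists>i<n. d i = t)" for t
    unfolding assms by (auto simp: poly_prod_list_zero_iff)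
  thus ?thesis unfolding lambda2_def eig_count_ge_prod_linear[OF assms] by simp
qed

text \<open>\<open>N\<close> is a symmetric version of \<open>M\<close> (same eigenvalues \<open>d\<close>); in this setting
  \<open>lambda2 M\<close> is the best constant in the Rayleigh bound
  \<open>\<langle>N x, x\<rangle> \<le> lambda2 M * \<langle>x, x\<rangle>\<close> on the orthogonal complement of \<open>u\<close>.\<close>

locale spectral_contraction =
  fixes n :: nat and N M :: "real mat" and v :: "nat \<Rightarrow> nat \<Rightarrow> real" and d :: "nat \<Rightarrow> real"
    and u :: "nat \<Rightarrow> real"
  assumes carrier: "N \<in> carrier_mat n n" and symmetric: "symmetric_mat n N"
    and orthonormal: "orthonormal n n v"
    and eigen: "\<And>i a. i < n \<Longrightarrow> a < n \<Longrightarrow> mat_vec n N (v i) a = d i * v i a"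
    and complete: "\<And>a b. a < n \<Longrightarrow> b < n \<Longrightarrow> (\<Sum>i<n. v i a * v i b) = (if a = b then 1 else 0)"
    and char_poly: "char_poly M = (\<Prod>i\<leftarrow>[0..<n]. [:- d i, 1:])"
    and contraction: "\<And>x. dot n (mat_vec n N x) x \<le> dot n x x"
    and nonneg: "\<And>x. 0 \<le> dot n (mat_vec n N x) x"
    and fixed: "\<And>a. a < n \<Longrightarrow> mat_vec n N u a = u a"
    and unit: "dot n u u = 1"
begin

lemma dot_basis: "i < n \<Longrightarrow> j < n \<Longrightarrow> dot n (v i) (v j) = (if i = j then 1 else 0)"
  using orthonormal unfolding orthonormal_def by blast

lemma basis_expansion: "a < n \<Longrightarrow> x a = (\<Sum>i<n. dot n x (v i) * v i a)"
proof -
  assume a: "a < n"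
  have "(\<Sum>i<n. dot n x (v i) * v i a) = (\<Sum>i<n. \<Sum>b<n. x b * (v i b * v i a))"
    unfolding dot_def by (simp add: sum_distrib_right mult.assoc)
  also have "\<dots> = (\<Sum>b<n. x b * (\<Sum>i<n. v i b * v i a))"
    by (subst sum.swap) (simp add: sum_distrib_left)
  also have "\<dots> = x a"
    using a complete by (simp add: if_distrib[of "\<lambda>t. _ * t"] sum.delta cong: if_cong)
  finally show ?thesis by simp
qed

lemma parseval: "dot n x y = (\<Sum>i<n. dot n x (v i) * dot n y (v i))"
proof -
  have "dot n x y = (\<Sum>a<n. x a * (\<Sum>i<n. dot n y (v i) * v i a))"
    unfolding dot_def[of n x y] by (rule sum.cong[OF refl]) (simp add: basis_expansion[symmetric])
  also have "\<dots> = (\<Sum>i<n. \<Sum>a<n. dot n y (v i) * (x a * v i a))"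
    by (subst sum.swap) (simp add: sum_distrib_left ac_simps)
  also have "\<dots> = (\<Sum>i<n. dot n x (v i) * dot n y (v i))"
    by (simp add: dot_def[of n x] sum_distrib_left ac_simps)
  finally show ?thesis .
qed

lemma dot_mat_vec_basis: "i < n \<Longrightarrow> dot n (mat_vec n N x) (v i) = d i * dot n x (v i)"
  using dot_mat_vec_symmetric[OF carrier symmetric, of x "v i"] eigen
  by (simp add: dot_scale_right[symmetric] cong: dot_cong)

lemma quadratic_form_expansion: "dot n (mat_vec n N x) x = (\<Sum>i<n. d i * (dot n x (v i))\<^sup>2)"
  unfolding parseval[of "mat_vec n N x" x] by (rule sum.cong) (auto simp: dot_mat_vec_basis power2_eq_square)

lemma eigenvalue_bounds: "i < n \<Longrightarrow> 0 \<le> d i \<and> d i \<le> 1"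
  using dot_mat_vec_basis[of i "v i"] dot_basis[of i i] nonneg[of "v i"] contraction[of "v i"]
  by simp

definition lambda2_candidates :: "real set" where
  "lambda2_candidates = {t. (\<exists>i<n. d i = t) \<and> 2 \<le> card {i. i < n \<and> t \<le> d i}}"

lemma lambda2_eq_Max: "lambda2 M = (if lambda2_candidates = {} then 0 else Max lambda2_candidates)"
  unfolding lambda2_prod_linear[OF char_poly] lambda2_candidates_def Let_def ..

lemma finite_lambda2_candidates: "finite lambda2_candidates"
  by (rule finite_subset[of _ "d ` {..<n}"]) (auto simp: lambda2_candidates_def)

lemma lambda2_in_candidates: "lambda2_candidates \<noteq> {} \<Longrightarrow> lambda2 M \<in> lambda2_candidates"
  unfolding lambda2_eq_Max using finite_lambda2_candidates by simp

lemma lambda2_bounds: "0 \<le> lambda2 M \<and> lambda2 M \<le> 1"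
proof (cases "lambda2_candidates = {}")
  case False
  from lambda2_in_candidates[OF False] obtain i where "i < n" "d i = lambda2 M"
    unfolding lambda2_candidates_def by auto
  thus ?thesis using eigenvalue_bounds by metis
qed (simp add: lambda2_eq_Max)

lemma lambda2_eq_0_if_lt_2:
  assumes "n < 2"
  shows "lambda2 M = 0"
proof -
  have "card {i. i < n \<and> t \<le> d i} \<le> card {..<n}" for t by (rule card_mono) auto
  hence "card {i. i < n \<and> t \<le> d i} < 2" for t
    using assms by (metis card_lessThan order_le_less_trans)
  hence "lambda2_candidates = {}" unfolding lambda2_candidates_def by (simp add: not_le)
  thus ?thesis unfolding lambda2_eq_Max by simp
qed

lemma lambda2_candidates_nonempty:
  assumes "2 \<le> n"
  shows "lambda2_candidates \<noteq> {}"
proof -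
  define t where "t = Min (d ` {..<n})"
  have "0 \<in> {..<n}" using assms by simp
  hence "t \<in> d ` {..<n}" unfolding t_def by (intro Min_in) blast+
  moreover have "{i. i < n \<and> t \<le> d i} = {..<n}" unfolding t_def by auto
  ultimately have "t \<in> lambda2_candidates" using assms unfolding lambda2_candidates_def by auto
  thus ?thesis by auto
qed

lemma two_eigenvalues_ge_lambda2:
  assumes "2 \<le> n"
  obtains i j where "i < n" "j < n" "i \<noteq> j" "lambda2 M \<le> d i" "lambda2 M \<le> d j"
proof -
  let ?S = "{i. i < n \<and> lambda2 M \<le> d i}"
  have "Suc 1 \<le> card ?S"
    using lambda2_in_candidates[OF lambda2_candidates_nonempty[OF assms]]
    unfolding lambda2_candidates_def by auto
  then obtain i B where iB: "?S = insert i B" "i \<notin> B" "1 \<le> card B"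
    unfolding card_le_Suc_iff by blast
  then obtain j where "j \<in> B" by (metis card.empty ex_in_conv not_one_le_zero)
  thus ?thesis using that iB by (metis (no_types, lifting) insertCI mem_Collect_eq)
qed

text \<open>Only one eigenvalue can exceed \<open>lambda2 M\<close>, so all other eigenvalues are below \<open>1\<close>;
  hence the fixed vector \<open>u\<close> is parallel to that eigenvector, which is thus orthogonal to \<open>x\<close>.\<close>

lemma dot_basis_above_lambda2:
  assumes x: "dot n x u = 0" and j: "j < n" and dj: "d j > lambda2 M"
  shows "dot n x (v j) = 0"
proof -
  have others: "d i \<le> lambda2 M" if i: "i < n" "i \<noteq> j" for i
  proof (rule ccontr)
    assume "\<not> d i \<le> lambda2 M"
    define t where "t = min (d i) (d j)"
    have "{i, j} \<subseteq> {k. k < n \<and> t \<le> d k}" using i j unfolding t_def by auto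
    hence "card {i, j} \<le> card {k. k < n \<and> t \<le> d k}" by (intro card_mono) auto
    hence "2 \<le> card {k. k < n \<and> t \<le> d k}" using i by simp
    moreover have "\<exists>k<n. d k = t" using i j unfolding t_def by (cases "d i \<le> d j") (auto simp: min_def)
    ultimately have t: "t \<in> lambda2_candidates" unfolding lambda2_candidates_def by auto
    hence "t \<le> Max lambda2_candidates" using finite_lambda2_candidates by simp
    hence "t \<le> lambda2 M" using t unfolding lambda2_eq_Max by auto
    thus False using \<open>\<not> d i \<le> lambda2 M\<close> dj unfolding t_def by simp
  qed
  have u_basis: "dot n u (v i) = 0" if i: "i < n" "i \<noteq> j" for i
  proof -
    have "dot n (mat_vec n N u) (v i) = dot n u (v i)" by (rule dot_cong) (use fixed in auto)
    hence "d i * dot n u (v i) = dot n u (v i)" using dot_mat_vec_basis[OF i(1)] by simp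
    moreover have "d i \<noteq> 1" using others[OF i] dj eigenvalue_bounds[OF j] by simp
    ultimately show ?thesis by (metis mult_cancel_right2)
  qed
  have sum_j: "(\<Sum>i<n. f i * dot n u (v i)) = f j * dot n u (v j)" for f
    using j u_basis by (subst sum.remove[of _ j]) (auto intro!: sum.neutral)
  have "1 = dot n u (v j) * dot n u (v j)"
    using parseval[of u u] sum_j[of "\<lambda>i. dot n u (v i)"] unit by simp
  moreover have "0 = dot n x (v j) * dot n u (v j)"
    using parseval[of x u] sum_j[of "\<lambda>i. dot n x (v i)"] x by simp
  ultimately show ?thesis by (metis mult_eq_0_iff zero_neq_one)
qed

lemma rayleigh_le_lambda2:
  assumes x: "dot n x u = 0"
  shows "dot n (mat_vec n N x) x \<le> lambda2 M * dot n x x"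
proof -
  have "dot n (mat_vec n N x) x = (\<Sum>i<n. d i * (dot n x (v i))\<^sup>2)" by (rule quadratic_form_expansion)
  also have "\<dots> \<le> (\<Sum>i<n. lambda2 M * (dot n x (v i))\<^sup>2)"
  proof (rule sum_mono)
    fix i assume "i \<in> {..<n}"
    thus "d i * (dot n x (v i))\<^sup>2 \<le> lambda2 M * (dot n x (v i))\<^sup>2"
      using dot_basis_above_lambda2[OF x] by (cases "d i > lambda2 M") (auto intro: mult_right_mono)
  qed
  also have "\<dots> = lambda2 M * dot n x x"
    using parseval[of x x] by (simp add: sum_distrib_left power2_eq_square)
  finally show ?thesis .
qed

lemma eigenvector_combination:
  fixes \<alpha> \<beta> :: real
  assumes ij: "i < n" "j < n" "i \<noteq> j"
  defines "y \<equiv> \<lambda>a. \<alpha> * v i a - \<beta> * v j a"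
  shows "\<And>a. a < n \<Longrightarrow> mat_vec n N y a = (\<alpha> * d i) * v i a - (\<beta> * d j) * v j a"
    and "dot n y y = \<alpha>\<^sup>2 + \<beta>\<^sup>2"
    and "dot n (mat_vec n N y) y = \<alpha>\<^sup>2 * d i + \<beta>\<^sup>2 * d j"
proof -
  have o: "dot n (v i) (v i) = 1" "dot n (v j) (v j) = 1" "dot n (v i) (v j) = 0" "dot n (v j) (v i) = 0"
    using dot_basis ij by auto
  show Ny: "mat_vec n N y a = (\<alpha> * d i) * v i a - (\<beta> * d j) * v j a" if a: "a < n" for a
  proof -
    have "mat_vec n N y a = \<alpha> * mat_vec n N (v i) a - \<beta> * mat_vec n N (v j) a"
      unfolding y_def mat_vec_def by (simp add: sum_subtractf sum_distrib_left algebra_simps)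
    thus ?thesis using eigen ij a by simp
  qed
  show "dot n y y = \<alpha>\<^sup>2 + \<beta>\<^sup>2" unfolding y_def dot_diff_diff o by (simp add: power2_eq_square)
  have "dot n (mat_vec n N y) y = dot n (\<lambda>a. (\<alpha> * d i) * v i a - (\<beta> * d j) * v j a) y"
    by (rule dot_cong) (use Ny in auto)
  also have "\<dots> = \<alpha>\<^sup>2 * d i + \<beta>\<^sup>2 * d j"
    unfolding y_def dot_diff_diff o by (simp add: power2_eq_square)
  finally show "dot n (mat_vec n N y) y = \<alpha>\<^sup>2 * d i + \<beta>\<^sup>2 * d j" .
qed

text \<open>Of two eigenvectors with eigenvalues at least \<open>lambda2 M\<close>, a suitable combination is
  orthogonal to \<open>u\<close>.\<close>

lemma lambda2_rayleigh_witness: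
  assumes "2 \<le> n"
  obtains y where "dot n y u = 0" "dot n y y > 0" "lambda2 M * dot n y y \<le> dot n (mat_vec n N y) y"
    and "lambda2 M = 1 \<Longrightarrow> \<forall>a<n. mat_vec n N y a = y a"
proof -
  obtain i j where ij: "i < n" "j < n" "i \<noteq> j" "lambda2 M \<le> d i" "lambda2 M \<le> d j"
    using two_eigenvalues_ge_lambda2[OF assms] by blast
  have d1: "d i = 1" "d j = 1" if "lambda2 M = 1"
    using that ij eigenvalue_bounds[of i] eigenvalue_bounds[of j] by auto
  define \<alpha> where "\<alpha> = dot n u (v j)"
  define \<beta> where "\<beta> = dot n u (v i)"
  define y where "y = (\<lambda>a. \<alpha> * v i a - \<beta> * v j a)"
  note y = eigenvector_combination[OF ij(1-3), where \<alpha>=\<alpha> and \<beta>=\<beta>, folded y_def]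
  have "dot n y u = \<alpha> * dot n (v i) u - \<beta> * dot n (v j) u"
    unfolding y_def dot_def by (simp add: sum_subtractf sum_distrib_left algebra_simps)
  hence yu: "dot n y u = 0" unfolding \<alpha>_def \<beta>_def by (simp add: dot_commute)
  have "lambda2 M * \<alpha>\<^sup>2 \<le> d i * \<alpha>\<^sup>2" "lambda2 M * \<beta>\<^sup>2 \<le> d j * \<beta>\<^sup>2"
    using ij by (intro mult_right_mono; simp)+
  hence y_rayleigh: "lambda2 M * dot n y y \<le> dot n (mat_vec n N y) y"
    unfolding y(2,3) by (simp add: distrib_left mult.commute)
  have y_fixed: "\<forall>a<n. mat_vec n N y a = y a" if "lambda2 M = 1"
    using y(1) d1[OF that] unfolding y_def by simp
  show ?thesis
  proof (cases "\<alpha> = 0 \<and> \<beta> = 0")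
    case True
    show ?thesis
    proof (rule that[of "v i"])
      show "dot n (v i) u = 0" using True unfolding \<beta>_def by (simp add: dot_commute)
      show "dot n (v i) (v i) > 0" "lambda2 M * dot n (v i) (v i) \<le> dot n (mat_vec n N (v i)) (v i)"
        using dot_mat_vec_basis[of i "v i"] dot_basis ij by simp_all
      show "\<forall>a<n. mat_vec n N (v i) a = v i a" if "lambda2 M = 1"
        using d1[OF that] eigen ij by simp
    qed
  next
    case False
    hence "dot n y y > 0" unfolding y(2) by (simp add: sum_power2_gt_zero_iff)
    thus ?thesis using that yu y_rayleigh y_fixed by blast
  qed
qed

lemma lambda2_le_rayleigh_bound:
  assumes c: "0 \<le> c" and bound: "\<And>x. dot n x u = 0 \<Longrightarrow> dot n (mat_vec n N x) x \<le> c * dot n x x"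
  shows "lambda2 M \<le> c"
proof (cases "n < 2")
  case True thus ?thesis using lambda2_eq_0_if_lt_2 c by simp
next
  case False
  then obtain y where y: "dot n y u = 0" "dot n y y > 0"
    "lambda2 M * dot n y y \<le> dot n (mat_vec n N y) y"
    using lambda2_rayleigh_witness by (metis not_le)
  hence "lambda2 M * dot n y y \<le> c * dot n y y" using bound[OF y(1)] by linarith
  thus ?thesis using y(2) by simp
qed

end

section \<open>Stochastic matrices with a stationary distribution\<close>

lemma weighted_mean_square_le:
  fixes w y :: "nat \<Rightarrow> real"
  assumes w: "\<And>j. j < n \<Longrightarrow> w j \<ge> 0" and s: "(\<Sum>j<n. w j) = 1"
  shows "(\<Sum>j<n. w j * y j)\<^sup>2 \<le> (\<Sum>j<n. w j * (y j)\<^sup>2)"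
proof -
  define m where "m = (\<Sum>j<n. w j * y j)"
  have "0 \<le> (\<Sum>j<n. w j * (y j - m)\<^sup>2)" using w by (intro sum_nonneg) auto
  also have "\<dots> = (\<Sum>j<n. w j * (y j)\<^sup>2) - 2 * m * (\<Sum>j<n. w j * y j) + m\<^sup>2 * (\<Sum>j<n. w j)"
    by (simp add: power2_diff algebra_simps sum.distrib sum_subtractf sum_distrib_left sum_distrib_right)
  also have "\<dots> = (\<Sum>j<n. w j * (y j)\<^sup>2) - m\<^sup>2" unfolding s m_def[symmetric] by (simp add: power2_eq_square)
  finally show ?thesis unfolding m_def by simp
qed

text \<open>Maximum principle: a harmonic function of a positive stochastic kernel attains its maximum at
  some state, and averaging with positive weights forces all values to equal it.\<close>

lemma positive_stochastic_harmonic_const: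
  fixes W :: "nat \<Rightarrow> nat \<Rightarrow> real" and g :: "nat \<Rightarrow> real"
  assumes pos: "\<And>i j. i < n \<Longrightarrow> j < n \<Longrightarrow> W i j > 0"
    and rows: "\<And>i. i < n \<Longrightarrow> (\<Sum>j<n. W i j) = 1"
    and harmonic: "\<And>i. i < n \<Longrightarrow> (\<Sum>j<n. W i j * g j) = g i"
    and j: "j < n"
  shows "g j = g 0"
proof -
  have ne: "g ` {..<n} \<noteq> {}" using j by auto
  obtain i where i: "i < n" "g i = Max (g ` {..<n})" using Max_in[OF _ ne] by auto
  have le: "g k \<le> g i" if "k < n" for k using i that by simp
  have "(\<Sum>k<n. W i k * (g i - g k)) = g i * (\<Sum>k<n. W i k) - (\<Sum>k<n. W i k * g k)"
    by (simp add: algebra_simps sum_subtractf sum_distrib_left)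
  also have "\<dots> = 0" using rows[OF i(1)] harmonic[OF i(1)] by simp
  finally have "\<forall>k\<in>{..<n}. W i k * (g i - g k) = 0"
    by (subst (asm) sum_nonneg_eq_0_iff) (use le pos[OF i(1)] in \<open>auto simp: less_imp_le\<close>)
  hence eq: "g k = g i" if "k < n" for k using pos[OF i(1) that] that by force
  show ?thesis using eq[OF j] eq[of 0] j by simp
qed

definition stochastic_with_stationary :: "nat \<Rightarrow> (nat \<Rightarrow> real) \<Rightarrow> real mat \<Rightarrow> bool" where
  "stochastic_with_stationary n \<pi> R \<longleftrightarrow> R \<in> carrier_mat n n \<and> (\<forall>i<n. \<forall>j<n. R $$ (i,j) \<ge> 0) \<and>
     (\<forall>i<n. (\<Sum>j<n. R $$ (i,j)) = 1) \<and> (\<forall>j<n. (\<Sum>i<n. \<pi> i * R $$ (i,j)) = \<pi> j)"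

text \<open>Conjugation by \<open>diag (sqrt \<pi>)\<close> turns \<open>\<ell>\<^sub>2(\<pi>)\<close> into the Euclidean space and the
  time reversal into the transpose.\<close>

definition sqrt_conj :: "nat \<Rightarrow> (nat \<Rightarrow> real) \<Rightarrow> real mat \<Rightarrow> real mat" where
  "sqrt_conj n \<pi> A = mat n n (\<lambda>(i,j). sqrt (\<pi> i) * A $$ (i,j) / sqrt (\<pi> j))"

definition sqrt_dist :: "(nat \<Rightarrow> real) \<Rightarrow> nat \<Rightarrow> real" where
  "sqrt_dist \<pi> = (\<lambda>i. sqrt (\<pi> i))"

lemma sqrt_conj_carrier: "sqrt_conj n \<pi> A \<in> carrier_mat n n"
  by (simp add: sqrt_conj_def)

lemma time_reversal_carrier: "time_reversal n \<pi> R \<in> carrier_mat n n"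
  by (simp add: time_reversal_def)

lemma mat_vec_sqrt_conj:
  "i < n \<Longrightarrow> mat_vec n (sqrt_conj n \<pi> R) x i = (\<Sum>j<n. sqrt (\<pi> i) * R $$ (i,j) / sqrt (\<pi> j) * x j)"
  unfolding mat_vec_def sqrt_conj_def by simp

context
  fixes n :: nat and \<pi> :: "nat \<Rightarrow> real"
  assumes pos: "\<And>i. i < n \<Longrightarrow> \<pi> i > 0" and sum1: "(\<Sum>i<n. \<pi> i) = 1"
begin

lemma pi_nonzero [simp]: "i < n \<Longrightarrow> \<pi> i \<noteq> 0"
  using pos[of i] by simp

lemma abs_pi [simp]: "i < n \<Longrightarrow> \<bar>\<pi> i\<bar> = \<pi> i"
  using pos[of i] by simp

lemma sqrt_pi_sq [simp]: "i < n \<Longrightarrow> sqrt (\<pi> i) * sqrt (\<pi> i) = \<pi> i"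
  using pos[of i] by simp

lemma stochastic_with_stationary_mult:
  assumes "stochastic_with_stationary n \<pi> A" "stochastic_with_stationary n \<pi> B"
  shows "stochastic_with_stationary n \<pi> (A * B)"
proof -
  have A: "A \<in> carrier_mat n n" and B: "B \<in> carrier_mat n n"
    using assms unfolding stochastic_with_stationary_def by auto
  note entry = index_mult_mat_sum[OF A B]
  have "(\<Sum>j<n. (A * B) $$ (i,j)) = 1" if i: "i < n" for i
  proof -
    have "(\<Sum>j<n. (A * B) $$ (i,j)) = (\<Sum>j<n. \<Sum>k<n. A $$ (i,k) * B $$ (k,j))"
      using i by (simp add: entry)
    also have "\<dots> = (\<Sum>k<n. A $$ (i,k) * (\<Sum>j<n. B $$ (k,j)))"
      by (subst sum.swap) (simp add: sum_distrib_left)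
    finally show ?thesis using assms i unfolding stochastic_with_stationary_def by simp
  qed
  moreover have "(\<Sum>i<n. \<pi> i * (A * B) $$ (i,j)) = \<pi> j" if j: "j < n" for j
  proof -
    have "(\<Sum>i<n. \<pi> i * (A * B) $$ (i,j)) = (\<Sum>i<n. \<Sum>k<n. \<pi> i * A $$ (i,k) * B $$ (k,j))"
      using j by (simp add: entry sum_distrib_left ac_simps)
    also have "\<dots> = (\<Sum>k<n. (\<Sum>i<n. \<pi> i * A $$ (i,k)) * B $$ (k,j))"
      by (subst sum.swap) (simp add: sum_distrib_right)
    finally show ?thesis using assms j unfolding stochastic_with_stationary_def by simp
  qed
  moreover have "(A * B) $$ (i,j) \<ge> 0" if "i < n" "j < n" for i j
    using assms that unfolding stochastic_with_stationary_def
    by (auto simp: entry intro!: sum_nonneg mult_nonneg_nonneg)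
  ultimately show ?thesis using A B unfolding stochastic_with_stationary_def by auto
qed

lemma stochastic_with_stationary_pow:
  assumes "stochastic_with_stationary n \<pi> A"
  shows "stochastic_with_stationary n \<pi> (A ^\<^sub>m k)"
proof (induction k)
  case 0
  have "dim_row A = n" using assms unfolding stochastic_with_stationary_def by auto
  thus ?case unfolding stochastic_with_stationary_def
    by (auto simp: if_distrib[of "\<lambda>t. _ * t"] sum.delta cong: if_cong)
next
  case (Suc k) thus ?case using stochastic_with_stationary_mult assms by simp
qed

lemma stochastic_with_stationary_time_reversal:
  assumes R: "stochastic_with_stationary n \<pi> R"
  shows "stochastic_with_stationary n \<pi> (time_reversal n \<pi> R)"
proof -
  have "(\<Sum>j<n. \<pi> j * R $$ (j,i) / \<pi> i) = 1" if "i < n" for i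
    using R that unfolding stochastic_with_stationary_def by (simp add: sum_divide_distrib[symmetric])
  moreover have "(\<Sum>i<n. \<pi> i * (\<pi> j * R $$ (j,i) / \<pi> i)) = \<pi> j" if "j < n" for j
    using R that unfolding stochastic_with_stationary_def by (simp add: sum_distrib_left[symmetric])
  ultimately show ?thesis
    using R pos unfolding stochastic_with_stationary_def time_reversal_def
    by (auto intro!: divide_nonneg_pos mult_nonneg_nonneg simp: less_imp_le)
qed

lemma sqrt_conj_mult:
  assumes "A \<in> carrier_mat n n" "B \<in> carrier_mat n n"
  shows "sqrt_conj n \<pi> (A * B) = sqrt_conj n \<pi> A * sqrt_conj n \<pi> B"
proof (rule eq_matI)
  fix i j assume "i < dim_row (sqrt_conj n \<pi> A * sqrt_conj n \<pi> B)"
    "j < dim_col (sqrt_conj n \<pi> A * sqrt_conj n \<pi> B)"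
  hence ij: "i < n" "j < n" by (auto simp: sqrt_conj_def)
  have "(sqrt_conj n \<pi> A * sqrt_conj n \<pi> B) $$ (i,j) =
      (\<Sum>k<n. sqrt (\<pi> i) * A $$ (i,k) / sqrt (\<pi> k) * (sqrt (\<pi> k) * B $$ (k,j) / sqrt (\<pi> j)))"
    using ij by (subst index_mult_mat_sum[OF sqrt_conj_carrier sqrt_conj_carrier]) (auto simp: sqrt_conj_def)
  also have "\<dots> = (\<Sum>k<n. sqrt (\<pi> i) * (A $$ (i,k) * B $$ (k,j)) / sqrt (\<pi> j))"
    by (intro sum.cong refl) (simp add: field_simps)
  also have "\<dots> = sqrt_conj n \<pi> (A * B) $$ (i,j)"
    using ij by (simp add: sqrt_conj_def index_mult_mat_sum[OF assms] sum_distrib_left sum_divide_distrib)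
  finally show "sqrt_conj n \<pi> (A * B) $$ (i,j) = (sqrt_conj n \<pi> A * sqrt_conj n \<pi> B) $$ (i,j)" by simp
qed (auto simp: sqrt_conj_def)

lemma sqrt_conj_pow:
  assumes A: "A \<in> carrier_mat n n"
  shows "sqrt_conj n \<pi> (A ^\<^sub>m k) = (sqrt_conj n \<pi> A) ^\<^sub>m k"
proof (induction k)
  case 0
  have "sqrt_conj n \<pi> (1\<^sub>m n) = 1\<^sub>m n" by (rule eq_matI) (auto simp: sqrt_conj_def)
  thus ?case using A by (simp add: sqrt_conj_def)
next
  case (Suc k) thus ?case using A by (simp add: sqrt_conj_mult)
qed

lemma sqrt_conj_time_reversal:
  "sqrt_conj n \<pi> (time_reversal n \<pi> R) = transpose_mat (sqrt_conj n \<pi> R)"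
proof (rule eq_matI)
  fix i j assume "i < dim_row (transpose_mat (sqrt_conj n \<pi> R))"
    "j < dim_col (transpose_mat (sqrt_conj n \<pi> R))"
  hence ij: "i < n" "j < n" by (auto simp: sqrt_conj_def)
  have "sqrt (\<pi> i) * (\<pi> j * R $$ (j,i) / \<pi> i) / sqrt (\<pi> j) = sqrt (\<pi> j) * R $$ (j,i) / sqrt (\<pi> i)"
    using ij by (subst (1 2) sqrt_pi_sq[symmetric]) (simp_all add: field_simps)
  thus "sqrt_conj n \<pi> (time_reversal n \<pi> R) $$ (i,j) = transpose_mat (sqrt_conj n \<pi> R) $$ (i,j)"
    using ij by (simp add: sqrt_conj_def time_reversal_def)
qed (auto simp: sqrt_conj_def time_reversal_def)

lemma char_poly_sqrt_conj:
  assumes A: "A \<in> carrier_mat n n"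
  shows "char_poly (sqrt_conj n \<pi> A) = char_poly A"
proof -
  define D where "D = mat n n (\<lambda>(i,j). if i = j then sqrt (\<pi> i) else 0)"
  define E where "E = mat n n (\<lambda>(i,j). if i = j then 1 / sqrt (\<pi> i) else 0)"
  have D: "D \<in> carrier_mat n n" and E: "E \<in> carrier_mat n n" unfolding D_def E_def by auto
  have DE: "D * E = 1\<^sub>m n" and ED: "E * D = 1\<^sub>m n"
    unfolding D_def E_def mult_diag_fun_mat one_mat_def
    by (auto intro!: cong_mat simp: pos less_imp_le)
  have "sqrt_conj n \<pi> A = D * A * E"
  proof (rule eq_matI)
    fix i j assume "i < dim_row (D * A * E)" "j < dim_col (D * A * E)"
    hence ij: "i < n" "j < n" using D E by auto
    have DA: "(D * A) $$ (i,k) = sqrt (\<pi> i) * A $$ (i,k)" if "k < n" for k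
      using ij that by (subst index_mult_mat_sum[OF D A])
        (auto simp: D_def if_distrib[of "\<lambda>t. t * _"] sum.delta cong: if_cong)
    have "(D * A * E) $$ (i,j) = (D * A) $$ (i,j) * (1 / sqrt (\<pi> j))"
      using ij D A E by (subst index_mult_mat_sum[of "D * A" n E])
        (auto simp: E_def if_distrib[of "\<lambda>t. _ * t"] sum.delta cong: if_cong)
    thus "sqrt_conj n \<pi> A $$ (i,j) = (D * A * E) $$ (i,j)" using ij DA by (simp add: sqrt_conj_def)
  qed (use D E in \<open>auto simp: sqrt_conj_def\<close>)
  hence "similar_mat_wit (sqrt_conj n \<pi> A) A D E"
    unfolding similar_mat_wit_def Let_def using D E A DE ED by (auto simp: sqrt_conj_def)
  thus ?thesis by (intro char_poly_similar) (auto simp: similar_mat_def)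
qed

lemma sqrt_conj_time_reversal_mult:
  assumes "R \<in> carrier_mat n n"
  shows "sqrt_conj n \<pi> (time_reversal n \<pi> R * R) = transpose_mat (sqrt_conj n \<pi> R) * sqrt_conj n \<pi> R"
  by (simp add: sqrt_conj_mult[OF time_reversal_carrier assms] sqrt_conj_time_reversal)

lemma dot_sqrt_conj_time_reversal_mult:
  assumes R: "R \<in> carrier_mat n n"
  shows "dot n (mat_vec n (sqrt_conj n \<pi> (time_reversal n \<pi> R * R)) x) z =
    dot n (mat_vec n (sqrt_conj n \<pi> R) x) (mat_vec n (sqrt_conj n \<pi> R) z)"
proof -
  let ?T = "sqrt_conj n \<pi> R"
  have T: "?T \<in> carrier_mat n n" "transpose_mat ?T \<in> carrier_mat n n" by (auto simp: sqrt_conj_def)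
  have "dot n (mat_vec n (transpose_mat ?T * ?T) x) z = dot n (mat_vec n (transpose_mat ?T) (mat_vec n ?T x)) z"
    by (rule dot_cong) (auto simp: mat_vec_mult[OF T(2) T(1)])
  also have "\<dots> = dot n (mat_vec n ?T x) (mat_vec n ?T z)" by (rule dot_mat_vec_transpose[OF T(1)])
  finally show ?thesis unfolding sqrt_conj_time_reversal_mult[OF R] .
qed

text \<open>In the original coordinates \<open>y = x / sqrt \<pi>\<close> this is Jensen's inequality
  \<open>(R y)\<^sup>2 \<le> R (y\<^sup>2)\<close> summed against the stationary distribution.\<close>

lemma dot_sqrt_conj_contraction:
  assumes R: "stochastic_with_stationary n \<pi> R"
  shows "dot n (mat_vec n (sqrt_conj n \<pi> R) x) (mat_vec n (sqrt_conj n \<pi> R) x) \<le> dot n x x"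
proof -
  define y where "y = (\<lambda>j. x j / sqrt (\<pi> j))"
  have R': "\<And>i j. i < n \<Longrightarrow> j < n \<Longrightarrow> R $$ (i,j) \<ge> 0" "\<And>i. i < n \<Longrightarrow> (\<Sum>j<n. R $$ (i,j)) = 1"
    "\<And>j. j < n \<Longrightarrow> (\<Sum>i<n. \<pi> i * R $$ (i,j)) = \<pi> j"
    using R unfolding stochastic_with_stationary_def by auto
  have Tx: "mat_vec n (sqrt_conj n \<pi> R) x i = sqrt (\<pi> i) * (\<Sum>j<n. R $$ (i,j) * y j)" if "i < n" for i
    unfolding mat_vec_sqrt_conj[OF that] y_def sum_distrib_left by (rule sum.cong) auto
  have "dot n (mat_vec n (sqrt_conj n \<pi> R) x) (mat_vec n (sqrt_conj n \<pi> R) x) =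
      (\<Sum>i<n. \<pi> i * (\<Sum>j<n. R $$ (i,j) * y j)\<^sup>2)"
    unfolding dot_def by (rule sum.cong) (auto simp: Tx power2_eq_square ac_simps)
  also have "\<dots> \<le> (\<Sum>i<n. \<pi> i * (\<Sum>j<n. R $$ (i,j) * (y j)\<^sup>2))"
    by (rule sum_mono, rule mult_left_mono, rule weighted_mean_square_le)
      (use R' pos in \<open>auto intro: less_imp_le\<close>)
  also have "\<dots> = (\<Sum>j<n. \<Sum>i<n. \<pi> i * R $$ (i,j) * (y j)\<^sup>2)"
    by (subst sum.swap) (simp add: sum_distrib_left mult.assoc)
  also have "\<dots> = (\<Sum>j<n. \<pi> j * (y j)\<^sup>2)"
    by (rule sum.cong[OF refl]) (simp add: sum_distrib_right[symmetric] R'(3))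
  also have "\<dots> = dot n x x"
    unfolding dot_def y_def using pos by (intro sum.cong refl) (simp add: power_divide power2_eq_square)
  finally show ?thesis .
qed

lemma mat_vec_sqrt_conj_sqrt_dist:
  assumes R: "stochastic_with_stationary n \<pi> R" and a: "a < n"
  shows "mat_vec n (sqrt_conj n \<pi> R) (sqrt_dist \<pi>) a = sqrt_dist \<pi> a"
proof -
  have "mat_vec n (sqrt_conj n \<pi> R) (sqrt_dist \<pi>) a = sqrt (\<pi> a) * (\<Sum>j<n. R $$ (a,j))"
    unfolding mat_vec_sqrt_conj[OF a] sqrt_dist_def sum_distrib_left
    by (rule sum.cong) (auto simp: pos less_imp_le)
  thus ?thesis using R a unfolding stochastic_with_stationary_def sqrt_dist_def by simp
qed

lemma mat_vec_transpose_sqrt_conj_sqrt_dist: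
  assumes R: "stochastic_with_stationary n \<pi> R" and a: "a < n"
  shows "mat_vec n (transpose_mat (sqrt_conj n \<pi> R)) (sqrt_dist \<pi>) a = sqrt_dist \<pi> a"
proof -
  have "mat_vec n (transpose_mat (sqrt_conj n \<pi> R)) (sqrt_dist \<pi>) a = (\<Sum>j<n. \<pi> j * R $$ (j,a)) / sqrt (\<pi> a)"
    unfolding mat_vec_def sqrt_dist_def sum_divide_distrib
    by (rule sum.cong) (use a in \<open>auto simp: sqrt_conj_def field_simps\<close>)
  also have "\<dots> = \<pi> a / sqrt (\<pi> a)" using R a unfolding stochastic_with_stationary_def by simp
  also have "\<dots> = sqrt_dist \<pi> a"
    unfolding sqrt_dist_def using a pos[OF a] by (metis real_div_sqrt less_imp_le)
  finally show ?thesis .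
qed

lemma dot_sqrt_conj_sqrt_dist:
  assumes R: "stochastic_with_stationary n \<pi> R"
  shows "dot n (mat_vec n (sqrt_conj n \<pi> R) x) (sqrt_dist \<pi>) = dot n x (sqrt_dist \<pi>)"
proof -
  have "dot n (sqrt_dist \<pi>) (mat_vec n (sqrt_conj n \<pi> R) x) =
      dot n (mat_vec n (transpose_mat (sqrt_conj n \<pi> R)) (sqrt_dist \<pi>)) x"
    by (rule dot_mat_vec_transpose[OF sqrt_conj_carrier, symmetric])
  also have "\<dots> = dot n (sqrt_dist \<pi>) x"
    by (rule dot_cong) (use mat_vec_transpose_sqrt_conj_sqrt_dist[OF R] in auto)
  finally show ?thesis by (simp add: dot_commute)
qed

lemma mat_vec_sqrt_conj_time_reversal_mult_sqrt_dist:
  assumes R: "stochastic_with_stationary n \<pi> R" and a: "a < n"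
  shows "mat_vec n (sqrt_conj n \<pi> (time_reversal n \<pi> R * R)) (sqrt_dist \<pi>) a = sqrt_dist \<pi> a"
proof -
  let ?T = "sqrt_conj n \<pi> R"
  have Rc: "R \<in> carrier_mat n n" using R unfolding stochastic_with_stationary_def by auto
  have "mat_vec n (transpose_mat ?T * ?T) (sqrt_dist \<pi>) a = mat_vec n (transpose_mat ?T) (mat_vec n ?T (sqrt_dist \<pi>)) a"
    by (rule mat_vec_mult[OF _ sqrt_conj_carrier a]) (simp add: sqrt_conj_def)
  also have "\<dots> = mat_vec n (transpose_mat ?T) (sqrt_dist \<pi>) a"
    by (rule mat_vec_cong) (use mat_vec_sqrt_conj_sqrt_dist[OF R] in auto)
  also have "\<dots> = sqrt_dist \<pi> a" by (rule mat_vec_transpose_sqrt_conj_sqrt_dist[OF R a])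
  finally show ?thesis unfolding sqrt_conj_time_reversal_mult[OF Rc] .
qed

lemma dot_sqrt_dist: "dot n (sqrt_dist \<pi>) (sqrt_dist \<pi>) = 1"
  unfolding dot_def sqrt_dist_def using sum1 by simp

lemma spectral_contraction_time_reversal_mult:
  assumes R: "stochastic_with_stationary n \<pi> R"
  obtains v d where "spectral_contraction n (sqrt_conj n \<pi> (time_reversal n \<pi> R * R))
    (time_reversal n \<pi> R * R) v d (sqrt_dist \<pi>)"
proof -
  have Rc: "R \<in> carrier_mat n n" using R unfolding stochastic_with_stationary_def by auto
  let ?M = "time_reversal n \<pi> R * R"
  let ?N = "sqrt_conj n \<pi> ?M"
  have M: "?M \<in> carrier_mat n n" using mult_carrier_mat[OF time_reversal_carrier Rc] .
  have S: "symmetric_mat n ?N"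
    unfolding sqrt_conj_time_reversal_mult[OF Rc]
    by (rule symmetric_mat_transpose_mult_self[OF sqrt_conj_carrier])
  obtain v d where "orthonormal n n v"
    and "\<And>i a. i < n \<Longrightarrow> a < n \<Longrightarrow> mat_vec n ?N (v i) a = d i * v i a"
    and "\<And>a b. a < n \<Longrightarrow> b < n \<Longrightarrow> (\<Sum>i<n. v i a * v i b) = (if a = b then 1 else 0)"
    and "char_poly ?N = (\<Prod>i\<leftarrow>[0..<n]. [:- d i, 1:])"
    using symmetric_mat_spectral_decomposition[OF sqrt_conj_carrier S] by blast
  hence "spectral_contraction n ?N ?M v d (sqrt_dist \<pi>)"
    using S dot_sqrt_dist char_poly_sqrt_conj[OF M] dot_sqrt_conj_contraction[OF R]
      mat_vec_sqrt_conj_time_reversal_mult_sqrt_dist[OF R]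
    by unfold_locales (simp_all add: sqrt_conj_carrier dot_sqrt_conj_time_reversal_mult[OF Rc] dot_self_nonneg)
  thus ?thesis by (rule that)
qed

section \<open>The spectral gap of the multiplicative reversibilization\<close>

lemma gamma_dagger_bounds:
  assumes "stochastic_with_stationary n \<pi> R"
  shows "0 \<le> gamma_dagger n \<pi> R \<and> gamma_dagger n \<pi> R \<le> 1"
proof -
  obtain v d where "spectral_contraction n (sqrt_conj n \<pi> (time_reversal n \<pi> R * R))
      (time_reversal n \<pi> R * R) v d (sqrt_dist \<pi>)"
    using spectral_contraction_time_reversal_mult[OF assms] .
  from spectral_contraction.lambda2_bounds[OF this] show ?thesis
    unfolding gamma_dagger_def by simp
qed

lemma gamma_dagger_single_state:
  assumes "stochastic_with_stationary n \<pi> R" "n < 2"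
  shows "gamma_dagger n \<pi> R = 1"
proof -
  obtain v d where "spectral_contraction n (sqrt_conj n \<pi> (time_reversal n \<pi> R * R))
      (time_reversal n \<pi> R * R) v d (sqrt_dist \<pi>)"
    using spectral_contraction_time_reversal_mult[OF assms(1)] .
  from spectral_contraction.lambda2_eq_0_if_lt_2[OF this assms(2)] show ?thesis
    unfolding gamma_dagger_def by simp
qed

text \<open>The induction works because \<open>sqrt_conj R\<close> maps the orthogonal complement of
  \<open>sqrt_dist \<pi>\<close> into itself.\<close>

lemma sqrt_conj_pow_contraction_perp:
  assumes R: "stochastic_with_stationary n \<pi> R" and x: "dot n x (sqrt_dist \<pi>) = 0"
  defines "T \<equiv> sqrt_conj n \<pi> R" and "\<mu> \<equiv> lambda2 (time_reversal n \<pi> R * R)"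
  shows "dot n (mat_vec n (T ^\<^sub>m p) x) (mat_vec n (T ^\<^sub>m p) x) \<le> \<mu> ^ p * dot n x x"
  using x
proof (induction p arbitrary: x)
  case 0
  have "dot n (mat_vec n (T ^\<^sub>m 0) x) (mat_vec n (T ^\<^sub>m 0) x) = dot n x x"
    by (rule dot_cong) (simp_all add: T_def sqrt_conj_def mat_vec_one)
  thus ?case by simp
next
  case (Suc p)
  have Rc: "R \<in> carrier_mat n n" using R unfolding stochastic_with_stationary_def by auto
  have T: "T \<in> carrier_mat n n" unfolding T_def by (rule sqrt_conj_carrier)
  obtain v d where spec: "spectral_contraction n (sqrt_conj n \<pi> (time_reversal n \<pi> R * R))
      (time_reversal n \<pi> R * R) v d (sqrt_dist \<pi>)"
    using spectral_contraction_time_reversal_mult[OF R] .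
  have "dot n (mat_vec n (T ^\<^sub>m Suc p) x) (mat_vec n (T ^\<^sub>m Suc p) x) =
      dot n (mat_vec n (T ^\<^sub>m p) (mat_vec n T x)) (mat_vec n (T ^\<^sub>m p) (mat_vec n T x))"
    by (rule dot_cong) (use T in \<open>simp_all add: mat_vec_mult[of "T ^\<^sub>m p" n T]\<close>)
  also have "\<dots> \<le> \<mu> ^ p * dot n (mat_vec n T x) (mat_vec n T x)"
    by (rule Suc.IH) (simp add: T_def dot_sqrt_conj_sqrt_dist[OF R] Suc.prems)
  also have "\<dots> \<le> \<mu> ^ p * (\<mu> * dot n x x)"
    using spectral_contraction.rayleigh_le_lambda2[OF spec Suc.prems]
      spectral_contraction.lambda2_bounds[OF spec]
    by (intro mult_left_mono) (simp_all add: \<mu>_def T_def dot_sqrt_conj_time_reversal_mult[OF Rc])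
  finally show ?case by (simp add: ac_simps)
qed

lemma gamma_dagger_pow_ge:
  assumes R: "stochastic_with_stationary n \<pi> R"
  shows "1 - (1 - gamma_dagger n \<pi> R) ^ p \<le> gamma_dagger n \<pi> (R ^\<^sub>m p)"
proof -
  have Rc: "R \<in> carrier_mat n n" using R unfolding stochastic_with_stationary_def by auto
  have Rp: "stochastic_with_stationary n \<pi> (R ^\<^sub>m p)" by (rule stochastic_with_stationary_pow[OF R])
  obtain v d where spec: "spectral_contraction n (sqrt_conj n \<pi> (time_reversal n \<pi> (R ^\<^sub>m p) * R ^\<^sub>m p))
      (time_reversal n \<pi> (R ^\<^sub>m p) * R ^\<^sub>m p) v d (sqrt_dist \<pi>)"
    using spectral_contraction_time_reversal_mult[OF Rp] .
  have "lambda2 (time_reversal n \<pi> (R ^\<^sub>m p) * R ^\<^sub>m p) \<le> (1 - gamma_dagger n \<pi> R) ^ p"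
  proof (rule spectral_contraction.lambda2_le_rayleigh_bound[OF spec])
    show "0 \<le> (1 - gamma_dagger n \<pi> R) ^ p" using gamma_dagger_bounds[OF R] by simp
    fix x assume "dot n x (sqrt_dist \<pi>) = 0"
    from sqrt_conj_pow_contraction_perp[OF R this, of p]
    show "dot n (mat_vec n (sqrt_conj n \<pi> (time_reversal n \<pi> (R ^\<^sub>m p) * R ^\<^sub>m p)) x) x \<le>
        (1 - gamma_dagger n \<pi> R) ^ p * dot n x x"
      by (simp add: dot_sqrt_conj_time_reversal_mult[OF pow_carrier_mat[OF Rc]] sqrt_conj_pow[OF Rc]
          gamma_dagger_def)
  qed
  thus ?thesis unfolding gamma_dagger_def[of n \<pi> "R ^\<^sub>m p"] by simp
qed

lemma time_reversal_mult_pos: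
  assumes R: "stochastic_with_stationary n \<pi> R"
    and Rpos: "\<And>i j. i < n \<Longrightarrow> j < n \<Longrightarrow> R $$ (i,j) > 0" and ij: "i < n" "j < n"
  shows "(time_reversal n \<pi> R * R) $$ (i,j) > 0"
proof -
  have Rc: "R \<in> carrier_mat n n" using R unfolding stochastic_with_stationary_def by auto
  have "(\<Sum>l<n. \<pi> l * R $$ (l,i) / \<pi> i * R $$ (l,j)) > 0"
    by (rule sum_pos) (use ij pos Rpos in \<open>auto intro!: mult_pos_pos divide_pos_pos\<close>)
  thus ?thesis using ij
    by (subst index_mult_mat_sum[OF time_reversal_carrier Rc]) (auto simp: time_reversal_def)
qed

text \<open>If \<open>lambda2 = 1\<close>, an eigenvector \<open>y \<perp> sqrt \<pi>\<close> of eigenvalue \<open>1\<close> exists; then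
  \<open>y / sqrt \<pi>\<close> is harmonic for the positive stochastic matrix \<open>R\<^sup>\<star> R\<close>, hence constant,
  hence \<open>y\<close> is parallel to \<open>sqrt \<pi>\<close>, so \<open>y = 0\<close>.\<close>

lemma gamma_dagger_pos:
  assumes R: "stochastic_with_stationary n \<pi> R" and n: "2 \<le> n"
    and Rpos: "\<And>i j. i < n \<Longrightarrow> j < n \<Longrightarrow> R $$ (i,j) > 0"
  shows "gamma_dagger n \<pi> R > 0"
proof (rule ccontr)
  let ?M = "time_reversal n \<pi> R * R"
  let ?N = "sqrt_conj n \<pi> ?M"
  assume "\<not> gamma_dagger n \<pi> R > 0"
  hence L1: "lambda2 ?M = 1" using gamma_dagger_bounds[OF R] unfolding gamma_dagger_def by simp
  have Rc: "R \<in> carrier_mat n n" using R unfolding stochastic_with_stationary_def by auto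
  obtain v d where spec: "spectral_contraction n ?N ?M v d (sqrt_dist \<pi>)"
    using spectral_contraction_time_reversal_mult[OF R] .
  obtain y where y: "dot n y (sqrt_dist \<pi>) = 0" "dot n y y > 0" "\<forall>a<n. mat_vec n ?N y a = y a"
    using spectral_contraction.lambda2_rayleigh_witness[OF spec n] L1 by metis
  have M: "stochastic_with_stationary n \<pi> ?M"
    by (intro stochastic_with_stationary_mult stochastic_with_stationary_time_reversal R)
  define g where "g = (\<lambda>j. y j / sqrt (\<pi> j))"
  have harmonic: "(\<Sum>j<n. ?M $$ (i,j) * g j) = g i" if i: "i < n" for i
  proof -
    have "mat_vec n ?N y i = sqrt (\<pi> i) * (\<Sum>j<n. ?M $$ (i,j) * g j)"
      unfolding mat_vec_sqrt_conj[OF i] g_def sum_distrib_left by (rule sum.cong) auto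
    thus ?thesis using y(3) i unfolding g_def by (simp add: field_simps pos)
  qed
  have "g j = g 0" if "j < n" for j
    using positive_stochastic_harmonic_const[of n "\<lambda>i j. ?M $$ (i,j)" g, OF _ _ harmonic that]
      time_reversal_mult_pos[OF R Rpos] M unfolding stochastic_with_stationary_def by blast
  hence yj: "y j = g 0 * sqrt_dist \<pi> j" if "j < n" for j
    using that unfolding g_def sqrt_dist_def by (simp add: field_simps pos)
  have "dot n y (sqrt_dist \<pi>) = g 0 * dot n (sqrt_dist \<pi>) (sqrt_dist \<pi>)"
    unfolding dot_def sum_distrib_left by (rule sum.cong) (auto simp: yj)
  hence "g 0 = 0" using y(1) dot_sqrt_dist by simp
  hence "dot n y y = 0" unfolding dot_def using yj by simp
  thus False using y(2) by simp
qed

end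

section \<open>The pseudo-spectral gap\<close>

lemma one_minus_power_le_quadratic:
  fixes x :: real
  assumes x: "0 \<le> x" "x \<le> 1"
  shows "(1 - x) ^ p \<le> 1 - real p * x + real p * (real p - 1) / 2 * x\<^sup>2"
proof (induction p)
  case (Suc p)
  define c where "c = real p * (real p - 1) / 2"
  have c: "c \<ge> 0" unfolding c_def by (cases p) auto
  have "(1 - x) ^ Suc p \<le> (1 - x) * (1 - real p * x + c * x\<^sup>2)"
    unfolding power_Suc by (rule mult_left_mono) (use Suc x in \<open>auto simp: c_def\<close>)
  also have "\<dots> = 1 - real (Suc p) * x + real (Suc p) * (real (Suc p) - 1) / 2 * x\<^sup>2 - c * x ^ 3"
    unfolding c_def by (simp add: field_simps power2_eq_square power3_eq_cube)
  also have "\<dots> \<le> 1 - real (Suc p) * x + real (Suc p) * (real (Suc p) - 1) / 2 * x\<^sup>2"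
    using c x by simp
  finally show ?case .
qed simp

lemma one_minus_power_gt:
  fixes x :: real
  assumes x: "0 < x" "x \<le> 1" and p: "p \<ge> 1"
  shows "real p * x * (1 - real p * x / 2) < 1 - (1 - x) ^ p"
proof -
  have "real p * (real p - 1) / 2 * x\<^sup>2 < real p * real p / 2 * x\<^sup>2"
    using x p by (simp add: field_simps)
  moreover have "real p * x * (1 - real p * x / 2) = real p * x - real p * real p / 2 * x\<^sup>2"
    by (simp add: algebra_simps power2_eq_square)
  ultimately show ?thesis using one_minus_power_le_quadratic[of x p] x by linarith
qed

lemma exists_max_if_le_inverse:
  fixes f :: "nat \<Rightarrow> real"
  assumes le: "\<And>k. k \<ge> 1 \<Longrightarrow> f k \<le> 1 / real k" and k0: "k0 \<ge> 1" "f k0 > 0"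
  obtains m where "m \<ge> 1" "\<And>k. k \<ge> 1 \<Longrightarrow> f k \<le> f m"
proof -
  define K where "K = nat \<lceil>1 / f k0\<rceil> + k0"
  have ne: "f ` {1..K} \<noteq> {}" using k0 unfolding K_def by auto
  obtain m where m: "m \<in> {1..K}" "f m = Max (f ` {1..K})" using Max_in[OF _ ne] by auto
  have "f k \<le> f m" if k: "k \<ge> 1" for k
  proof (cases "k \<le> K")
    case True thus ?thesis using m k by simp
  next
    case False
    have "1 / f k0 < real k" using False unfolding K_def by linarith
    hence "1 / real k < f k0" using k0 k by (simp add: field_simps)
    hence "f k < f k0" using le[OF k] by simp
    also have "f k0 \<le> f m" using m k0 unfolding K_def by simp
    finally show ?thesis by simp
  qed
  thus ?thesis using that m by auto
qed

lemma gamma_ps_le: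
  assumes "\<And>k. k \<ge> 1 \<Longrightarrow> gamma_dagger n \<pi> (R ^\<^sub>m k) / real k \<le> c"
  shows "gamma_ps n \<pi> R \<le> c"
  unfolding gamma_ps_def by (rule cSUP_least) (use assms in auto)

context
  fixes n :: nat and \<pi> :: "nat \<Rightarrow> real"
  assumes pos: "\<And>i. i < n \<Longrightarrow> \<pi> i > 0" and sum1: "(\<Sum>i<n. \<pi> i) = 1"
begin

lemma gamma_ps_ge:
  assumes R: "stochastic_with_stationary n \<pi> R" and k: "k \<ge> 1"
  shows "gamma_dagger n \<pi> (R ^\<^sub>m k) / real k \<le> gamma_ps n \<pi> R"
proof -
  have "gamma_dagger n \<pi> (R ^\<^sub>m j) / real j \<le> 1" for j
    using gamma_dagger_bounds[OF pos sum1 stochastic_with_stationary_pow[OF pos sum1 R, of j]]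
    by (cases j) (auto simp: divide_le_eq)
  thus ?thesis unfolding gamma_ps_def using k by (intro cSUP_upper bdd_aboveI2) auto
qed

lemma exists_gamma_dagger_pow_pos:
  assumes R: "stochastic_with_stationary n \<pi> R" and prim: "primitive n R"
  obtains k where "k \<ge> 1" "gamma_dagger n \<pi> (R ^\<^sub>m k) > 0"
proof (cases "n < 2")
  case True
  thus ?thesis using that[of 1] gamma_dagger_single_state[OF pos sum1 R] by simp
next
  case False
  obtain k where k: "\<forall>i<n. \<forall>j<n. (R ^\<^sub>m k) $$ (i,j) > 0" using prim unfolding primitive_def by blast
  have "k \<noteq> 0"
  proof
    assume "k = 0"
    hence "(R ^\<^sub>m k) $$ (0,1) = 0" using R False unfolding stochastic_with_stationary_def by auto
    moreover have "(R ^\<^sub>m k) $$ (0,1) > 0" using k False by simp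
    ultimately show False by simp
  qed
  moreover have "gamma_dagger n \<pi> (R ^\<^sub>m k) > 0"
    using gamma_dagger_pos[OF pos sum1 stochastic_with_stationary_pow[OF pos sum1 R]] False k by auto
  ultimately show ?thesis using that[of k] by simp
qed

lemma gamma_ps_attained:
  assumes R: "stochastic_with_stationary n \<pi> R" and prim: "primitive n R"
  shows "k_ps n \<pi> R \<ge> 1"
    and "gamma_ps n \<pi> R = gamma_dagger n \<pi> (R ^\<^sub>m k_ps n \<pi> R) / real (k_ps n \<pi> R)"
    and "gamma_ps n \<pi> R > 0"
proof -
  define f where "f k = gamma_dagger n \<pi> (R ^\<^sub>m k) / real k" for k
  obtain k0 where k0: "k0 \<ge> 1" "gamma_dagger n \<pi> (R ^\<^sub>m k0) > 0"
    by (rule exists_gamma_dagger_pow_pos[OF R prim])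
  have f_k0: "f k0 > 0" using k0 unfolding f_def by simp
  have f_le: "f k \<le> 1 / real k" if "k \<ge> 1" for k
    using gamma_dagger_bounds[OF pos sum1 stochastic_with_stationary_pow[OF pos sum1 R, of k]]
    unfolding f_def by (intro divide_right_mono) auto
  obtain m where m: "m \<ge> 1" "\<And>k. k \<ge> 1 \<Longrightarrow> f k \<le> f m"
    using exists_max_if_le_inverse[OF f_le k0(1) f_k0] by metis
  have "gamma_ps n \<pi> R \<le> f m" by (rule gamma_ps_le) (use m(2) in \<open>simp add: f_def\<close>)
  moreover have "f m \<le> gamma_ps n \<pi> R" using gamma_ps_ge[OF R m(1)] unfolding f_def .
  ultimately have "gamma_ps n \<pi> R = f m" by simp
  hence "\<exists>k. k \<ge> 1 \<and> gamma_ps n \<pi> R = gamma_dagger n \<pi> (R ^\<^sub>m k) / real k"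
    using m(1) unfolding f_def by blast
  from LeastI_ex[OF this] show "k_ps n \<pi> R \<ge> 1"
    and "gamma_ps n \<pi> R = gamma_dagger n \<pi> (R ^\<^sub>m k_ps n \<pi> R) / real (k_ps n \<pi> R)"
    unfolding k_ps_def by blast+
  show "gamma_ps n \<pi> R > 0" using gamma_ps_ge[OF R k0(1)] f_k0 unfolding f_def by simp
qed

lemma gamma_ps_pow_le:
  assumes R: "stochastic_with_stationary n \<pi> R" and p: "p \<ge> 1"
  shows "gamma_ps n \<pi> (R ^\<^sub>m p) \<le> real p * gamma_ps n \<pi> R"
proof (rule gamma_ps_le)
  fix k :: nat assume k: "k \<ge> 1"
  have Rc: "R \<in> carrier_mat n n" using R unfolding stochastic_with_stationary_def by auto
  have "gamma_dagger n \<pi> ((R ^\<^sub>m p) ^\<^sub>m k) / real k =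
      real p * (gamma_dagger n \<pi> (R ^\<^sub>m (p * k)) / real (p * k))"
    using p by (simp add: pow_mat_pow_mat[OF Rc])
  also have "\<dots> \<le> real p * gamma_ps n \<pi> R"
    using k p by (intro mult_left_mono gamma_ps_ge[OF R]) auto
  finally show "gamma_dagger n \<pi> ((R ^\<^sub>m p) ^\<^sub>m k) / real k \<le> real p * gamma_ps n \<pi> R" .
qed

lemma gamma_ps_pow_gt:
  assumes R: "stochastic_with_stationary n \<pi> R" and prim: "primitive n R" and p: "p \<ge> 1"
  shows "real p * gamma_ps n \<pi> R * (1 - real p * real (k_ps n \<pi> R) * gamma_ps n \<pi> R / 2)
    < gamma_ps n \<pi> (R ^\<^sub>m p)"
proof -
  have Rc: "R \<in> carrier_mat n n" using R unfolding stochastic_with_stationary_def by auto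
  define k where "k = k_ps n \<pi> R"
  define x where "x = real k * gamma_ps n \<pi> R"
  note attained = gamma_ps_attained[OF R prim, folded k_def]
  have x: "x = gamma_dagger n \<pi> (R ^\<^sub>m k)" unfolding x_def using attained(1,2) by simp
  have x_pos: "0 < x" unfolding x_def using attained(1,3) by simp
  have x_le: "x \<le> 1"
    unfolding x using gamma_dagger_bounds[OF pos sum1 stochastic_with_stationary_pow[OF pos sum1 R]] by blast
  have "real p * gamma_ps n \<pi> R * (1 - real p * real k * gamma_ps n \<pi> R / 2) =
      real p * x * (1 - real p * x / 2) / real k"
    unfolding x_def using attained(1) by (simp add: field_simps)
  also have "\<dots> < (1 - (1 - x) ^ p) / real k"
    using one_minus_power_gt[OF x_pos x_le p] attained(1) by (simp add: divide_strict_right_mono)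
  also have "\<dots> \<le> gamma_dagger n \<pi> ((R ^\<^sub>m k) ^\<^sub>m p) / real k"
    using gamma_dagger_pow_ge[OF pos sum1 stochastic_with_stationary_pow[OF pos sum1 R], of k p]
    unfolding x by (simp add: divide_right_mono)
  also have "\<dots> = gamma_dagger n \<pi> ((R ^\<^sub>m p) ^\<^sub>m k) / real k"
    by (simp add: pow_mat_pow_mat[OF Rc] mult.commute)
  also have "\<dots> \<le> gamma_ps n \<pi> (R ^\<^sub>m p)"
    by (rule gamma_ps_ge[OF stochastic_with_stationary_pow[OF pos sum1 R] attained(1)])
  finally show ?thesis unfolding k_def .
qed

end

lemma stochastic_with_stationary_if_stationary_dist:
  "row_stochastic n P \<Longrightarrow> stationary_dist n P \<pi> \<Longrightarrow> stochastic_with_stationary n \<pi> P"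
  unfolding row_stochastic_def stationary_dist_def stochastic_with_stationary_def by auto

theorem mainTheorem4:
  fixes n :: nat and P :: "real mat" and \<pi> :: "nat \<Rightarrow> real" and p :: nat
  assumes "n \<ge> 1"
    and "row_stochastic n P"
    and "primitive n P"
    and "stationary_dist n P \<pi>"
    and "p \<ge> 1"
  shows "real p * gamma_ps n \<pi> P * (1 - real p * real (k_ps n \<pi> P) * gamma_ps n \<pi> P / 2)
           < gamma_ps n \<pi> (P ^\<^sub>m p)
       \<and> gamma_ps n \<pi> (P ^\<^sub>m p) \<le> real p * gamma_ps n \<pi> P
       \<and> (real p \<le> 1 / (real (k_ps n \<pi> P) * gamma_ps n \<pi> P)
            \<longrightarrow> gamma_ps n \<pi> (P ^\<^sub>m p) \<ge> real p * gamma_ps n \<pi> P / 2)"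
proof -
  have pos: "\<And>i. i < n \<Longrightarrow> \<pi> i > 0" and sum1: "(\<Sum>i<n. \<pi> i) = 1"
    using assms(4) unfolding stationary_dist_def by auto
  have P: "stochastic_with_stationary n \<pi> P"
    using stochastic_with_stationary_if_stationary_dist[OF assms(2,4)] .
  define \<gamma> where "\<gamma> = gamma_ps n \<pi> P"
  define k where "k = real (k_ps n \<pi> P)"
  have lower: "real p * \<gamma> * (1 - real p * k * \<gamma> / 2) < gamma_ps n \<pi> (P ^\<^sub>m p)"
    using gamma_ps_pow_gt[OF pos sum1 P assms(3,5)] unfolding \<gamma>_def k_def .
  have k: "k \<ge> 1" and \<gamma>: "\<gamma> > 0"
    using gamma_ps_attained(1,3)[OF pos sum1 P assms(3)] unfolding \<gamma>_def k_def by simp_all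
  have "real p * \<gamma> / 2 \<le> real p * \<gamma> * (1 - real p * k * \<gamma> / 2)" if "real p \<le> 1 / (k * \<gamma>)"
  proof -
    have "1 / 2 \<le> 1 - real p * k * \<gamma> / 2" using that k \<gamma> by (simp add: field_simps)
    from mult_left_mono[OF this, of "real p * \<gamma>"] show ?thesis using \<gamma> by simp
  qed
  thus ?thesis
    using lower gamma_ps_pow_le[OF pos sum1 P assms(5)] unfolding \<gamma>_def k_def by fastforce
qed

end
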